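(* Assume $H_0$ satisfies TQO-1 and TQO-2. Let $q\le L^*$ and let $W=\sum_{A\in\mathcal{S}(q)}W_A$, where each $W_A$ acts on the square $A$, $[W_A,P]=0$ and $W_AP=0$ for all $A\in\mathcal{S}(q)$, and set $w=\max_{A\in\mathcal{S}(q)}\|W_A\|$. Then $W$ is relatively bounded by $H_0$ with constant $b=O(wq^2)$; that is, there is a constant $c$ independent of $L,q,w$ such that $\|W\psi\|\le c\,wq^2\,\|H_0\psi\|$ for all $\psi\in\mathcal{H}$.
   Context: Let $\Lambda=\mathbb{Z}_L\times\mathbb{Z}_L$ (periodic boundary conditions), each site $u$ carrying a finite-dimensional Hilbert space $\mathcal{H}_u$ of dimension $O(1)$, $\mathcal{H}=\bigotimes_u\mathcal{H}_u$. For $r\ge1$, $\mathcal{S}(r)$ is the set of all $r\times r$ square blocks of sites. An operator acts on $A$ if it is the identity outside $A$. $H_0=\sum_{A\in\mathcal{S}(2)}G_A$ with each $G_A$ acting on $A$, the $G_A$ pairwise commuting, $G_A\ge0$, $G_A^2\ge G_A$, and frustration-free: the ground subspace $P=\{\psi:G_A\psi=0\ \forall A\}$ is nonzero; $P$ also denotes its projector. $P_A$ is the projector onto $\ker G_A$, and for a square $B$, $P_B=\prod_{A\in\mathcal{S}(2),A\subseteq B}P_A$. There is a constant $c_0>0$ and an integer $L^*\ge c_0L$ such that: TQO-1: for every square $A\in\mathcal{S}(r)$, $r\le L^*$, and every operator $O_A$ acting on $A$, $PO_AP=zP$ for some $z\in\mathbb{C}$; TQO-2: for every such $A$, with $B\in\mathcal{S}(r+2)$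 the square containing $A$ and all its nearest neighbors, $\mathrm{Tr}_{\Lambda\setminus A}(P)$ and $\mathrm{Tr}_{\Lambda\setminus A}(P_B)$ have the same kernel. An operator $W$ is relatively bounded by $H$ with constant $b$ if $\|W\psi\|\le b\|H\psi\|$ for all $\psi$. *)

theory Defs
  imports Complex_Main
begin

text \<open>Sites are pairs of integers with coordinates in 0..L-1. A basis configuration
  assigns to each site u a local basis index below d u (and 0 off the region).
  The Hilbert space H is the space of functions cfgs -> complex; operators are
  matrices indexed by configurations.\<close>

type_synonym site = "int \<times> int"
type_synonym cfg = "site \<Rightarrow> nat"
type_synonym vec = "cfg \<Rightarrow> complex"
type_synonym op = "cfg \<Rightarrow> cfg \<Rightarrow> complex"

definition sites :: "nat \<Rightarrow> site set" where
  "sites L = {0..<int L} \<times> {0..<int L}"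

definition cfgs_on :: "(site \<Rightarrow> nat) \<Rightarrow> site set \<Rightarrow> cfg set" where
  "cfgs_on d S = {\<sigma>. (\<forall>u\<in>S. \<sigma> u < d u) \<and> (\<forall>u. u \<notin> S \<longrightarrow> \<sigma> u = 0)}"

definition cfgs :: "nat \<Rightarrow> (site \<Rightarrow> nat) \<Rightarrow> cfg set" where
  "cfgs L d = cfgs_on d (sites L)"

definition apply_op :: "nat \<Rightarrow> (site \<Rightarrow> nat) \<Rightarrow> op \<Rightarrow> vec \<Rightarrow> vec" where
  "apply_op L d M \<psi> = (\<lambda>\<sigma>. \<Sum>\<tau>\<in>cfgs L d. M \<sigma> \<tau> * \<psi> \<tau>)"

definition inner :: "nat \<Rightarrow> (site \<Rightarrow> nat) \<Rightarrow> vec \<Rightarrow> vec \<Rightarrow> complex" where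
  "inner L d \<phi> \<psi> = (\<Sum>\<sigma>\<in>cfgs L d. cnj (\<phi> \<sigma>) * \<psi> \<sigma>)"

definition vnorm :: "nat \<Rightarrow> (site \<Rightarrow> nat) \<Rightarrow> vec \<Rightarrow> real" where
  "vnorm L d \<psi> = sqrt (\<Sum>\<sigma>\<in>cfgs L d. (cmod (\<psi> \<sigma>))\<^sup>2)"

definition opnorm :: "nat \<Rightarrow> (site \<Rightarrow> nat) \<Rightarrow> op \<Rightarrow> real" where
  "opnorm L d M = Sup {vnorm L d (apply_op L d M \<psi>) | \<psi>. vnorm L d \<psi> \<le> 1}"

definition mmult :: "nat \<Rightarrow> (site \<Rightarrow> nat) \<Rightarrow> op \<Rightarrow> op \<Rightarrow> op" where
  "mmult L d M N = (\<lambda>\<sigma> \<tau>. if \<sigma> \<in> cfgs L d \<and> \<tau> \<in> cfgs L d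
      then (\<Sum>\<rho>\<in>cfgs L d. M \<sigma> \<rho> * N \<rho> \<tau>) else 0)"

definition idop :: "nat \<Rightarrow> (site \<Rightarrow> nat) \<Rightarrow> op" where
  "idop L d = (\<lambda>\<sigma> \<tau>. if \<sigma> = \<tau> \<and> \<sigma> \<in> cfgs L d then 1 else 0)"

definition adjoint :: "op \<Rightarrow> op" where
  "adjoint M = (\<lambda>\<sigma> \<tau>. cnj (M \<tau> \<sigma>))"

definition op_eq :: "nat \<Rightarrow> (site \<Rightarrow> nat) \<Rightarrow> op \<Rightarrow> op \<Rightarrow> bool" where
  "op_eq L d M N \<longleftrightarrow> (\<forall>\<sigma>\<in>cfgs L d. \<forall>\<tau>\<in>cfgs L d. M \<sigma> \<tau> = N \<sigma> \<tau>)"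

definition vec_eq :: "nat \<Rightarrow> (site \<Rightarrow> nat) \<Rightarrow> vec \<Rightarrow> vec \<Rightarrow> bool" where
  "vec_eq L d \<phi> \<psi> \<longleftrightarrow> (\<forall>\<sigma>\<in>cfgs L d. \<phi> \<sigma> = \<psi> \<sigma>)"

definition commute :: "nat \<Rightarrow> (site \<Rightarrow> nat) \<Rightarrow> op \<Rightarrow> op \<Rightarrow> bool" where
  "commute L d M N \<longleftrightarrow> op_eq L d (mmult L d M N) (mmult L d N M)"

definition psd :: "nat \<Rightarrow> (site \<Rightarrow> nat) \<Rightarrow> op \<Rightarrow> bool" where
  "psd L d M \<longleftrightarrow> (\<forall>\<psi>. inner L d \<psi> (apply_op L d M \<psi>) \<in> \<real> \<and>
                         0 \<le> Re (inner L d \<psi> (apply_op L d M \<psi>)))"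

definition op_le :: "nat \<Rightarrow> (site \<Rightarrow> nat) \<Rightarrow> op \<Rightarrow> op \<Rightarrow> bool" where
  "op_le L d M N \<longleftrightarrow> psd L d (\<lambda>\<sigma> \<tau>. N \<sigma> \<tau> - M \<sigma> \<tau>)"

definition kernel :: "nat \<Rightarrow> (site \<Rightarrow> nat) \<Rightarrow> op \<Rightarrow> vec set" where
  "kernel L d M = {\<psi>. vec_eq L d (apply_op L d M \<psi>) (\<lambda>_. 0)}"

definition is_orth_proj :: "nat \<Rightarrow> (site \<Rightarrow> nat) \<Rightarrow> op \<Rightarrow> vec set \<Rightarrow> bool" where
  "is_orth_proj L d M V \<longleftrightarrow>
     (\<forall>\<sigma> \<tau>. (\<sigma> \<notin> cfgs L d \<or> \<tau> \<notin> cfgs L d) \<longrightarrow> M \<sigma> \<tau> = 0) \<and>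
     op_eq L d M (adjoint M) \<and> op_eq L d (mmult L d M M) M \<and>
     (\<forall>\<psi>. \<psi> \<in> V \<longleftrightarrow> vec_eq L d (apply_op L d M \<psi>) \<psi>)"

text \<open>M acts on A: M = M_A \<otimes> Id_{complement of A}.\<close>
definition acts_on :: "nat \<Rightarrow> (site \<Rightarrow> nat) \<Rightarrow> site set \<Rightarrow> op \<Rightarrow> bool" where
  "acts_on L d A M \<longleftrightarrow>
    (\<forall>\<sigma>\<in>cfgs L d. \<forall>\<tau>\<in>cfgs L d.
       ((\<exists>u\<in>sites L - A. \<sigma> u \<noteq> \<tau> u) \<longrightarrow> M \<sigma> \<tau> = 0) \<and>
       (\<forall>\<sigma>'\<in>cfgs L d. \<forall>\<tau>'\<in>cfgs L d.
          (\<forall>u\<in>A. \<sigma>' u = \<sigma> u \<and> \<tau>' u = \<tau> u) \<and>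
          (\<forall>u\<in>sites L - A. \<sigma> u = \<tau> u \<and> \<sigma>' u = \<tau>' u) \<longrightarrow> M \<sigma>' \<tau>' = M \<sigma> \<tau>))"

definition sq :: "nat \<Rightarrow> int \<Rightarrow> int \<Rightarrow> nat \<Rightarrow> site set" where
  "sq L x y r = {((x + i) mod int L, (y + j) mod int L) | i j.
                   0 \<le> i \<and> i < int r \<and> 0 \<le> j \<and> j < int r}"

definition squares :: "nat \<Rightarrow> nat \<Rightarrow> site set set" where
  "squares L r = {sq L x y r | x y. True}"

definition merge :: "site set \<Rightarrow> cfg \<Rightarrow> cfg \<Rightarrow> cfg" where
  "merge A \<alpha> \<gamma> = (\<lambda>u. if u \<in> A then \<alpha> u else \<gamma> u)"

definition ptrace :: "nat \<Rightarrow> (site \<Rightarrow> nat) \<Rightarrow> site set \<Rightarrow> op \<Rightarrow> op" where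
  "ptrace L d A X = (\<lambda>\<alpha> \<beta>. \<Sum>\<gamma>\<in>cfgs_on d (sites L - A). X (merge A \<alpha> \<gamma>) (merge A \<beta> \<gamma>))"

definition rkernel :: "(site \<Rightarrow> nat) \<Rightarrow> site set \<Rightarrow> op \<Rightarrow> vec set" where
  "rkernel d A K = {v. \<forall>\<alpha>\<in>cfgs_on d A. (\<Sum>\<beta>\<in>cfgs_on d A. K \<alpha> \<beta> * v \<beta>) = 0}"

definition ground :: "nat \<Rightarrow> (site \<Rightarrow> nat) \<Rightarrow> (site set \<Rightarrow> op) \<Rightarrow> vec set" where
  "ground L d G = {\<psi>. \<forall>A\<in>squares L 2. \<psi> \<in> kernel L d (G A)}"

definition Pblock :: "nat \<Rightarrow> (site \<Rightarrow> nat) \<Rightarrow> (site set \<Rightarrow> op) \<Rightarrow> site set \<Rightarrow> op" where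
  "Pblock L d PA B = Finite_Set.fold (\<lambda>A M. mmult L d (PA A) M) (idop L d)
                        {A \<in> squares L 2. A \<subseteq> B}"

definition H0 :: "nat \<Rightarrow> (site set \<Rightarrow> op) \<Rightarrow> op" where
  "H0 L G = (\<lambda>\<sigma> \<tau>. \<Sum>A\<in>squares L 2. G A \<sigma> \<tau>)"

definition hamiltonian_ok ::
  "nat \<Rightarrow> (site \<Rightarrow> nat) \<Rightarrow> (site set \<Rightarrow> op) \<Rightarrow> (site set \<Rightarrow> op) \<Rightarrow> op \<Rightarrow> bool" where
  "hamiltonian_ok L d G PA P \<longleftrightarrow>
     (\<forall>A\<in>squares L 2. acts_on L d A (G A) \<and> psd L d (G A) \<and>
         op_le L d (G A) (mmult L d (G A) (G A)) \<and>
         is_orth_proj L d (PA A) (kernel L d (G A))) \<and>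
     (\<forall>A\<in>squares L 2. \<forall>A'\<in>squares L 2. commute L d (G A) (G A')) \<and>
     (\<exists>\<psi>\<in>ground L d G. \<exists>\<sigma>\<in>cfgs L d. \<psi> \<sigma> \<noteq> 0) \<and>
     is_orth_proj L d P (ground L d G)"

definition TQO1 :: "nat \<Rightarrow> (site \<Rightarrow> nat) \<Rightarrow> nat \<Rightarrow> op \<Rightarrow> bool" where
  "TQO1 L d Lstar P \<longleftrightarrow>
     (\<forall>r A OA. 1 \<le> r \<and> r \<le> Lstar \<and> A \<in> squares L r \<and> acts_on L d A OA \<longrightarrow>
        (\<exists>z. op_eq L d (mmult L d P (mmult L d OA P)) (\<lambda>\<sigma> \<tau>. z * P \<sigma> \<tau>)))"

definition TQO2 :: "nat \<Rightarrow> (site \<Rightarrow> nat) \<Rightarrow> nat \<Rightarrow> (site set \<Rightarrow> op) \<Rightarrow> op \<Rightarrow> bool" where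
  "TQO2 L d Lstar PA P \<longleftrightarrow>
     (\<forall>r x y. 1 \<le> r \<and> r \<le> Lstar \<longrightarrow>
        rkernel d (sq L x y r) (ptrace L d (sq L x y r) P) =
        rkernel d (sq L x y r)
          (ptrace L d (sq L x y r) (Pblock L d PA (sq L (x - 1) (y - 1) (r + 2)))))"

end

theory Submission
  imports Defs "HOL-Library.Function_Algebras" "HOL-Library.FuncSet" "HOL-Analysis.L2_Norm"
begin

text \<open>For a \<open>q \<times> q\<close> square \<open>A\<close> let \<open>Q\<^sub>A\<close> be the block projector \<open>P\<^sub>B\<close> of the enlarged
  \<open>(q+2) \<times> (q+2)\<close> square \<open>B \<supseteq> A\<close>. By TQO-2 the reductions of \<open>P\<close> and \<open>Q\<^sub>A\<close> to \<open>A\<close> have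
  the same kernel, and together with \<open>W\<^sub>A P = 0\<close> this forces \<open>W\<^sub>A Q\<^sub>A = Q\<^sub>A W\<^sub>A = 0\<close>. Hence
  \<open>W\<^sub>A = W\<^sub>A (1 - Q\<^sub>A)\<close>, and \<open>W\<^sub>A\<close> commutes with \<open>Q\<^sub>A\<^sub>'\<close> when the enlarged squares are disjoint.
  Expanding \<open>\<parallel>W\<psi>\<parallel>\<^sup>2 = \<Sum>\<langle>W\<^sub>A\<psi>, W\<^sub>A\<^sub>'\<psi>\<rangle>\<close> and bounding overlapping pairs by
  \<open>\<parallel>(1 - Q\<^sub>A)\<psi>\<parallel>\<close>, all others by \<open>\<parallel>(1 - Q\<^sub>A)(1 - Q\<^sub>A\<^sub>')\<psi>\<parallel>\<close>, gives
  \<open>\<parallel>W\<psi>\<parallel>\<^sup>2 \<le> w\<^sup>2 (K\<^sub>1 K\<^sub>2 + K\<^sub>2\<^sup>2) \<Sum>\<^sub>i\<^sub>,\<^sub>j \<parallel>(1 - P\<^sub>j)(1 - P\<^sub>i)\<psi>\<parallel>\<^sup>2\<close>, where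
  \<open>K\<^sub>1 = (2q+3)\<^sup>2\<close> bounds the number of overlapping enlarged squares and \<open>K\<^sub>2 = (q+2)\<^sup>2\<close> the number
  of enlarged squares containing a given \<open>2 \<times> 2\<close> square, via
  \<open>\<parallel>(1 - Q\<^sub>A)\<phi>\<parallel>\<^sup>2 \<le> \<Sum>\<^sub>i\<^sub>\<subseteq>\<^sub>B \<parallel>(1 - P\<^sub>i)\<phi>\<parallel>\<^sup>2\<close>. Finally \<open>G\<^sub>i\<^sup>2 \<ge> G\<^sub>i\<close> gives
  \<open>\<langle>u, G\<^sub>i u\<rangle> \<ge> \<parallel>(1 - P\<^sub>i) u\<parallel>\<^sup>2\<close>, and since all \<open>G\<^sub>i\<close>, \<open>P\<^sub>j\<close> commute,
  \<open>\<Sum>\<^sub>i\<^sub>,\<^sub>j \<parallel>(1 - P\<^sub>j)(1 - P\<^sub>i)\<psi>\<parallel>\<^sup>2 \<le> \<parallel>H\<^sub>0\<psi>\<parallel>\<^sup>2\<close>; the constant is \<open>c = 18\<close>.\<close>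

lemma cfgs_on_out: "\<sigma> \<in> cfgs_on d S \<Longrightarrow> u \<notin> S \<Longrightarrow> \<sigma> u = 0"
  unfolding cfgs_on_def by blast

lemma cfgs_on_in: "\<sigma> \<in> cfgs_on d S \<Longrightarrow> u \<in> S \<Longrightarrow> \<sigma> u < d u"
  unfolding cfgs_on_def by blast

lemma cfgs_onI: "(\<And>u. u \<in> S \<Longrightarrow> \<sigma> u < d u) \<Longrightarrow> (\<And>u. u \<notin> S \<Longrightarrow> \<sigma> u = 0) \<Longrightarrow> \<sigma> \<in> cfgs_on d S"
  unfolding cfgs_on_def by blast

lemma finite_cfgs_on:
  assumes "finite S"
  shows "finite (cfgs_on d S)"
proof -
  let ?r = "\<lambda>(\<sigma>::cfg) u. if u \<in> S then \<sigma> u else undefined"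
  have inj: "inj_on ?r (cfgs_on d S)"
  proof
    fix \<sigma> \<tau> assume s: "\<sigma> \<in> cfgs_on d S" and t: "\<tau> \<in> cfgs_on d S" and e: "?r \<sigma> = ?r \<tau>"
    show "\<sigma> = \<tau>"
    proof
      fix u
      have "?r \<sigma> u = ?r \<tau> u" using e by metis
      then show "\<sigma> u = \<tau> u"
        using s t cfgs_on_out[of _ d S u] by (cases "u \<in> S") (simp, metis)
    qed
  qed
  have "?r ` cfgs_on d S \<subseteq> PiE S (\<lambda>u. {..<d u})"
    by (auto simp: PiE_iff dest: cfgs_on_in)
  moreover have "finite (PiE S (\<lambda>u. {..<d u}))"
    using assms by (intro finite_PiE) auto
  ultimately have "finite (?r ` cfgs_on d S)" by (rule finite_subset)
  then show ?thesis using inj finite_imageD by blast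
qed

lemma finite_sites: "finite (sites L)"
  by (simp add: sites_def)

lemma finite_cfgs: "finite (cfgs L d)"
  by (simp add: cfgs_def finite_cfgs_on finite_sites)

definition basis_vec :: "cfg \<Rightarrow> vec" where "basis_vec \<sigma>0 = (\<lambda>\<sigma>. if \<sigma> = \<sigma>0 then 1 else 0)"

context
  fixes L :: nat and d :: "site \<Rightarrow> nat"
begin

lemma apply_op_add: "apply_op L d M (\<phi> + \<psi>) = apply_op L d M \<phi> + apply_op L d M \<psi>"
  by (auto simp: apply_op_def distrib_left sum.distrib)

lemma apply_op_diff: "apply_op L d M (\<phi> - \<psi>) = apply_op L d M \<phi> - apply_op L d M \<psi>"
  by (auto simp: apply_op_def right_diff_distrib sum_subtractf)

lemma apply_op_scale: "apply_op L d M (\<lambda>\<tau>. c * \<psi> \<tau>) = (\<lambda>\<sigma>. c * apply_op L d M \<psi> \<sigma>)"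
  by (auto simp: apply_op_def sum_distrib_left mult_ac)

lemma apply_op_zero: "apply_op L d M (\<lambda>_. 0) = (\<lambda>_. 0)"
  by (auto simp: apply_op_def)

lemma apply_op_cong: "vec_eq L d \<psi> \<psi>' \<Longrightarrow> apply_op L d M \<psi> = apply_op L d M \<psi>'"
  by (auto simp: apply_op_def vec_eq_def intro!: sum.cong)

lemma apply_op_mmult:
  "\<sigma> \<in> cfgs L d \<Longrightarrow> apply_op L d (mmult L d M N) \<psi> \<sigma> = apply_op L d M (apply_op L d N \<psi>) \<sigma>"
  by (auto simp: apply_op_def mmult_def sum_distrib_left sum_distrib_right mult_ac intro: sum.swap)

lemma apply_op_mmult_vec:
  "vec_eq L d (apply_op L d (mmult L d M N) \<psi>) (apply_op L d M (apply_op L d N \<psi>))"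
  by (simp add: vec_eq_def apply_op_mmult)

lemma apply_op_op_eq: "op_eq L d M N \<Longrightarrow> vec_eq L d (apply_op L d M \<psi>) (apply_op L d N \<psi>)"
  by (auto simp: op_eq_def vec_eq_def apply_op_def intro!: sum.cong)

lemma apply_op_basis_vec: "\<sigma>0 \<in> cfgs L d \<Longrightarrow> apply_op L d M (basis_vec \<sigma>0) \<sigma> = M \<sigma> \<sigma>0"
  using finite_cfgs[of L d] by (simp add: apply_op_def basis_vec_def if_distrib cong: if_cong)

lemma op_eqI_vec:
  assumes "\<And>\<psi>. vec_eq L d (apply_op L d M \<psi>) (apply_op L d N \<psi>)"
  shows "op_eq L d M N"
  unfolding op_eq_def
proof (intro ballI)
  fix \<sigma> \<tau> assume s: "\<sigma> \<in> cfgs L d" and t: "\<tau> \<in> cfgs L d"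
  have "apply_op L d M (basis_vec \<tau>) \<sigma> = apply_op L d N (basis_vec \<tau>) \<sigma>"
    using assms[of "basis_vec \<tau>"] s by (simp add: vec_eq_def)
  then show "M \<sigma> \<tau> = N \<sigma> \<tau>" using t by (simp add: apply_op_basis_vec)
qed

lemma vec_eq_refl[simp]: "vec_eq L d \<psi> \<psi>" by (simp add: vec_eq_def)
lemma vec_eq_sym: "vec_eq L d \<phi> \<psi> \<Longrightarrow> vec_eq L d \<psi> \<phi>" by (simp add: vec_eq_def)

lemma inner_zero_right[simp]: "inner L d \<phi> (\<lambda>_. 0) = 0"
  by (simp add: inner_def)

lemma inner_cong: "vec_eq L d \<phi> \<phi>' \<Longrightarrow> vec_eq L d \<psi> \<psi>' \<Longrightarrow> inner L d \<phi> \<psi> = inner L d \<phi>' \<psi>'"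
  by (auto simp: inner_def vec_eq_def intro!: sum.cong)

lemma inner_cnj: "inner L d \<psi> \<phi> = cnj (inner L d \<phi> \<psi>)"
  by (simp add: inner_def mult.commute)

lemma inner_add_right: "inner L d \<phi> (\<psi> + \<chi>) = inner L d \<phi> \<psi> + inner L d \<phi> \<chi>"
  by (simp add: inner_def distrib_left sum.distrib)

lemma inner_diff_right: "inner L d \<phi> (\<psi> - \<chi>) = inner L d \<phi> \<psi> - inner L d \<phi> \<chi>"
  by (simp add: inner_def right_diff_distrib sum_subtractf)

lemma inner_add_left: "inner L d (\<psi> + \<chi>) \<phi> = inner L d \<psi> \<phi> + inner L d \<chi> \<phi>"
  by (simp add: inner_def distrib_right sum.distrib)

lemma inner_diff_left: "inner L d (\<psi> - \<chi>) \<phi> = inner L d \<psi> \<phi> - inner L d \<chi> \<phi>"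
  by (simp add: inner_def left_diff_distrib sum_subtractf)

lemma inner_sum_right: "inner L d \<phi> (\<lambda>\<sigma>. \<Sum>i\<in>I. f i \<sigma>) = (\<Sum>i\<in>I. inner L d \<phi> (f i))"
  by (simp add: inner_def sum_distrib_left) (rule sum.swap)

lemma inner_sum_left: "inner L d (\<lambda>\<sigma>. \<Sum>i\<in>I. f i \<sigma>) \<phi> = (\<Sum>i\<in>I. inner L d (f i) \<phi>)"
  by (simp add: inner_def sum_distrib_right) (rule sum.swap)

lemma inner_scale_right: "inner L d \<phi> (\<lambda>\<sigma>. c * \<psi> \<sigma>) = c * inner L d \<phi> \<psi>"
  by (simp add: inner_def sum_distrib_left mult_ac)

lemma inner_self: "inner L d \<psi> \<psi> = complex_of_real ((vnorm L d \<psi>)\<^sup>2)"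
proof -
  have "inner L d \<psi> \<psi> = (\<Sum>\<sigma>\<in>cfgs L d. complex_of_real ((cmod (\<psi> \<sigma>))\<^sup>2))"
    unfolding inner_def by (intro sum.cong refl) (simp add: complex_norm_square[symmetric] mult.commute del: of_real_power)
  also have "\<dots> = complex_of_real (\<Sum>\<sigma>\<in>cfgs L d. (cmod (\<psi> \<sigma>))\<^sup>2)" by simp
  also have "(\<Sum>\<sigma>\<in>cfgs L d. (cmod (\<psi> \<sigma>))\<^sup>2) = (vnorm L d \<psi>)\<^sup>2"
    unfolding vnorm_def by (simp add: sum_nonneg)
  finally show ?thesis .
qed

lemma vnorm_nonneg: "0 \<le> vnorm L d \<psi>"
  by (simp add: vnorm_def sum_nonneg)

lemma vnorm_L2: "vnorm L d \<psi> = L2_set (\<lambda>\<sigma>. cmod (\<psi> \<sigma>)) (cfgs L d)"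
  by (simp add: vnorm_def L2_set_def)

lemma vnorm_sq: "(vnorm L d \<psi>)\<^sup>2 = Re (inner L d \<psi> \<psi>)"
  by (simp add: inner_self)

lemma vnorm_cong: "vec_eq L d \<phi> \<psi> \<Longrightarrow> vnorm L d \<phi> = vnorm L d \<psi>"
  by (auto simp: vnorm_def vec_eq_def intro!: sum.cong)

lemma inner_CS: "cmod (inner L d \<phi> \<psi>) \<le> vnorm L d \<phi> * vnorm L d \<psi>"
proof -
  have "cmod (inner L d \<phi> \<psi>) \<le> (\<Sum>\<sigma>\<in>cfgs L d. cmod (cnj (\<phi> \<sigma>) * \<psi> \<sigma>))"
    unfolding inner_def by (rule norm_sum)
  also have "\<dots> = (\<Sum>\<sigma>\<in>cfgs L d. \<bar>cmod (\<phi> \<sigma>)\<bar> * \<bar>cmod (\<psi> \<sigma>)\<bar>)"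
    by (simp add: norm_mult)
  also have "\<dots> \<le> vnorm L d \<phi> * vnorm L d \<psi>"
    unfolding vnorm_L2 by (rule L2_set_mult_ineq)
  finally show ?thesis .
qed

lemma vnorm_zero_iff: "vnorm L d \<psi> = 0 \<longleftrightarrow> vec_eq L d \<psi> (\<lambda>_. 0)"
  using finite_cfgs[of L d] by (simp add: vnorm_L2 L2_set_eq_0_iff vec_eq_def)

lemma adjoint_adjoint[simp]: "adjoint (adjoint M) = M"
  by (simp add: adjoint_def)

lemma inner_adjoint: "inner L d \<phi> (apply_op L d M \<psi>) = inner L d (apply_op L d (adjoint M) \<phi>) \<psi>"
  by (simp add: inner_def apply_op_def adjoint_def sum_distrib_left sum_distrib_right)
    (subst sum.swap, simp add: mult_ac)

lemma inner_herm:
  assumes "op_eq L d M (adjoint M)"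
  shows "inner L d \<phi> (apply_op L d M \<psi>) = inner L d (apply_op L d M \<phi>) \<psi>"
proof -
  have "inner L d \<phi> (apply_op L d M \<psi>) = inner L d (apply_op L d (adjoint M) \<phi>) \<psi>"
    by (rule inner_adjoint)
  also have "\<dots> = inner L d (apply_op L d M \<phi>) \<psi>"
    using apply_op_op_eq[OF assms, of \<phi>] by (intro inner_cong) (auto simp: vec_eq_def)
  finally show ?thesis .
qed

lemma vec_eq_inner:
  assumes "\<And>\<phi>. inner L d \<phi> \<psi> = inner L d \<phi> \<psi>'"
  shows "vec_eq L d \<psi> \<psi>'"
  unfolding vec_eq_def
proof
  fix \<sigma> assume s: "\<sigma> \<in> cfgs L d"
  have e: "inner L d (basis_vec \<sigma>) f = f \<sigma>" for f
  proof -
    have "inner L d (basis_vec \<sigma>) f = (\<Sum>\<sigma>'\<in>cfgs L d. if \<sigma> = \<sigma>' then f \<sigma>' else 0)"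
      unfolding inner_def by (intro sum.cong) (auto simp: basis_vec_def)
    then show ?thesis using s finite_cfgs[of L d] by simp
  qed
  have "inner L d (basis_vec \<sigma>) \<psi> = \<psi> \<sigma>" "inner L d (basis_vec \<sigma>) \<psi>' = \<psi>' \<sigma>" by (rule e)+
  then show "\<psi> \<sigma> = \<psi>' \<sigma>" using assms by metis
qed

end

context
  fixes L :: nat and d :: "site \<Rightarrow> nat"
begin

definition herm :: "op \<Rightarrow> bool" where
  "herm M \<longleftrightarrow> (\<forall>\<phi> \<psi>. inner L d \<phi> (apply_op L d M \<psi>) = inner L d (apply_op L d M \<phi>) \<psi>)"

definition comm :: "op \<Rightarrow> op \<Rightarrow> bool" where
  "comm X Y \<longleftrightarrow> (\<forall>\<psi>. vec_eq L d (apply_op L d X (apply_op L d Y \<psi>)) (apply_op L d Y (apply_op L d X \<psi>)))"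

definition idem :: "op \<Rightarrow> bool" where
  "idem M \<longleftrightarrow> (\<forall>\<psi>. vec_eq L d (apply_op L d M (apply_op L d M \<psi>)) (apply_op L d M \<psi>))"

lemma herm_op_eq: "op_eq L d M (adjoint M) \<Longrightarrow> herm M"
  unfolding herm_def using inner_herm by blast

lemma comm_commute: "commute L d X Y \<Longrightarrow> comm X Y"
  unfolding comm_def commute_def
proof
  fix \<psi> assume c: "op_eq L d (mmult L d X Y) (mmult L d Y X)"
  show "vec_eq L d (apply_op L d X (apply_op L d Y \<psi>)) (apply_op L d Y (apply_op L d X \<psi>))"
    using apply_op_mmult_vec[of L d X Y \<psi>] apply_op_mmult_vec[of L d Y X \<psi>] apply_op_op_eq[OF c, of \<psi>]
    by (simp add: vec_eq_def)
qed

lemma comm_sym: "comm X Y \<Longrightarrow> comm Y X"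
  unfolding comm_def by (simp add: vec_eq_def)

lemma idem_op_eq: "op_eq L d (mmult L d M M) M \<Longrightarrow> idem M"
  unfolding idem_def
proof
  fix \<psi> assume c: "op_eq L d (mmult L d M M) M"
  show "vec_eq L d (apply_op L d M (apply_op L d M \<psi>)) (apply_op L d M \<psi>)"
    using apply_op_mmult_vec[of L d M M \<psi>] apply_op_op_eq[OF c, of \<psi>]
    by (simp add: vec_eq_def)
qed

lemma inner_adjoint2: "inner L d \<phi> (apply_op L d (adjoint M) \<psi>) = inner L d (apply_op L d M \<phi>) \<psi>"
  using inner_adjoint[of L d \<phi> "adjoint M" \<psi>] by simp

lemma inner_scale_left: "inner L d (\<lambda>\<sigma>. c * \<psi> \<sigma>) \<phi> = cnj c * inner L d \<psi> \<phi>"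
  by (simp add: inner_def sum_distrib_left mult_ac)

lemma psd_herm:
  assumes "psd L d M"
  shows "herm M"
  unfolding herm_def
proof (intro allI)
  fix \<phi> \<psi>
  let ?B = "\<lambda>x y. inner L d x (apply_op L d M y)"
  have real: "?B x x \<in> \<real>" for x using assms by (simp add: psd_def)
  have expand: "?B (\<phi> + (\<lambda>\<sigma>. c * \<psi> \<sigma>)) (\<phi> + (\<lambda>\<sigma>. c * \<psi> \<sigma>))
      = ?B \<phi> \<phi> + c * ?B \<phi> \<psi> + cnj c * ?B \<psi> \<phi> + cnj c * c * ?B \<psi> \<psi>" for c
    by (simp add: apply_op_add apply_op_scale inner_add_left inner_add_right inner_scale_left
        inner_scale_right algebra_simps)
  have r1: "?B \<phi> \<psi> + ?B \<psi> \<phi> \<in> \<real>"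
  proof -
    have "?B \<phi> \<phi> + 1 * ?B \<phi> \<psi> + cnj 1 * ?B \<psi> \<phi> + cnj 1 * 1 * ?B \<psi> \<psi> \<in> \<real>"
      using real[of "\<phi> + (\<lambda>\<sigma>. 1 * \<psi> \<sigma>)"] expand[of 1] by simp
    then have "(?B \<phi> \<phi> + ?B \<psi> \<psi>) + (?B \<phi> \<psi> + ?B \<psi> \<phi>) \<in> \<real>"
      by (simp add: algebra_simps)
    moreover have "?B \<phi> \<phi> + ?B \<psi> \<psi> \<in> \<real>" using real by (simp add: Reals_add)
    ultimately show ?thesis by (metis Reals_diff add_diff_cancel_left')
  qed
  have r2: "\<i> * ?B \<phi> \<psi> - \<i> * ?B \<psi> \<phi> \<in> \<real>"
  proof -
    have "?B \<phi> \<phi> + \<i> * ?B \<phi> \<psi> + cnj \<i> * ?B \<psi> \<phi> + cnj \<i> * \<i> * ?B \<psi> \<psi> \<in> \<real>"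
      using real[of "\<phi> + (\<lambda>\<sigma>. \<i> * \<psi> \<sigma>)"] expand[of \<i>] by simp
    then have "(?B \<phi> \<phi> + ?B \<psi> \<psi>) + (\<i> * ?B \<phi> \<psi> - \<i> * ?B \<psi> \<phi>) \<in> \<real>"
      by (simp add: algebra_simps)
    moreover have "?B \<phi> \<phi> + ?B \<psi> \<psi> \<in> \<real>" using real by (simp add: Reals_add)
    ultimately show ?thesis by (metis Reals_diff add_diff_cancel_left')
  qed
  have "?B \<psi> \<phi> = cnj (?B \<phi> \<psi>)"
    using r1 r2 by (auto simp: complex_eq_iff Reals_def complex_is_Real_iff)
  then show "?B \<phi> \<psi> = inner L d (apply_op L d M \<phi>) \<psi>"
    by (metis complex_cnj_cnj inner_cnj)
qed

lemma comm_adjoint: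
  assumes hG: "herm G" and cX: "comm X G"
  shows "comm (adjoint X) G"
  unfolding comm_def
proof
  fix \<psi>
  let ?a = "apply_op L d"
  show "vec_eq L d (?a (adjoint X) (?a G \<psi>)) (?a G (?a (adjoint X) \<psi>))"
  proof (rule vec_eq_inner)
    fix \<phi>
    have "inner L d \<phi> (?a (adjoint X) (?a G \<psi>)) = inner L d (?a G (?a X \<phi>)) \<psi>"
      using hG by (simp add: inner_adjoint2 herm_def)
    also have "\<dots> = inner L d (?a X (?a G \<phi>)) \<psi>"
      using cX by (intro inner_cong) (auto simp: comm_def vec_eq_def)
    also have "\<dots> = inner L d \<phi> (?a G (?a (adjoint X) \<psi>))"
      using hG by (simp add: inner_adjoint2 herm_def)
    finally show "inner L d \<phi> (?a (adjoint X) (?a G \<psi>)) = inner L d \<phi> (?a G (?a (adjoint X) \<psi>))" .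
  qed
qed

context
  fixes G P :: op
  assumes P_idem: "idem P"
    and P_fixes_iff: "\<And>\<psi>. vec_eq L d (apply_op L d G \<psi>) (\<lambda>_. 0) \<longleftrightarrow> vec_eq L d (apply_op L d P \<psi>) \<psi>"
begin

lemma kernel_invariant:
  assumes "comm Y G"
  shows "vec_eq L d (apply_op L d P (apply_op L d Y (apply_op L d P \<psi>))) (apply_op L d Y (apply_op L d P \<psi>))"
proof -
  let ?a = "apply_op L d"
  have "vec_eq L d (?a G (?a P \<psi>)) (\<lambda>_. 0)"
    using P_fixes_iff[of "?a P \<psi>"] P_idem by (simp add: idem_def)
  then have "?a Y (?a G (?a P \<psi>)) = ?a Y (\<lambda>_. 0)" by (rule apply_op_cong)
  moreover have "vec_eq L d (?a G (?a Y (?a P \<psi>))) (?a Y (?a G (?a P \<psi>)))"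
    using assms by (simp add: comm_def vec_eq_def)
  ultimately have "vec_eq L d (?a G (?a Y (?a P \<psi>))) (\<lambda>_. 0)"
    by (simp add: apply_op_zero)
  then show ?thesis using P_fixes_iff by blast
qed

text \<open>Both \<open>X\<close> and \<open>X\<^sup>*\<close> leave \<open>ker G = ran P\<close> invariant, so \<open>P X P = X P\<close> and
  \<open>P X\<^sup>* P = X\<^sup>* P\<close>; taking adjoints in the latter gives \<open>P X = X P\<close>.\<close>
lemma comm_kernel_proj:
  assumes hG: "herm G" and hP: "herm P" and cX: "comm X G"
  shows "comm X P"
  unfolding comm_def
proof
  fix \<psi>
  let ?a = "apply_op L d"
  have "vec_eq L d (?a P (?a X \<psi>)) (?a X (?a P \<psi>))"
  proof (rule vec_eq_inner)
    fix \<phi>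
    have "inner L d \<phi> (?a P (?a X \<psi>)) = inner L d (?a P \<phi>) (?a X \<psi>)"
      using hP by (simp add: herm_def)
    also have "\<dots> = inner L d (?a (adjoint X) (?a P \<phi>)) \<psi>"
      by (rule inner_adjoint)
    also have "\<dots> = inner L d (?a P (?a (adjoint X) (?a P \<phi>))) \<psi>"
      using kernel_invariant[OF comm_adjoint[OF hG cX], of \<phi>] by (intro inner_cong) (auto simp: vec_eq_def)
    also have "\<dots> = inner L d (?a (adjoint X) (?a P \<phi>)) (?a P \<psi>)"
      using hP by (simp add: herm_def)
    also have "\<dots> = inner L d \<phi> (?a P (?a X (?a P \<psi>)))"
      using hP by (simp add: herm_def inner_adjoint[symmetric])
    also have "\<dots> = inner L d \<phi> (?a X (?a P \<psi>))"
      using kernel_invariant[OF cX, of \<psi>] by (intro inner_cong) (auto simp: vec_eq_def)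
    finally show "inner L d \<phi> (?a P (?a X \<psi>)) = inner L d \<phi> (?a X (?a P \<psi>))" .
  qed
  then show "vec_eq L d (?a X (?a P \<psi>)) (?a P (?a X \<psi>))" by (simp add: vec_eq_def)
qed

end

end

section \<open>Positive operators and the projectors onto their kernels\<close>

lemma (in vector_space) subspace_subset_image_of_inj_on:
  assumes lin: "Vector_Spaces.linear scale scale f" and V: "subspace V"
    and fin: "finite S" and VS: "V \<subseteq> span S" and fV: "f ` V \<subseteq> V" and inj: "inj_on f V"
  shows "V \<subseteq> f ` V"
proof
  fix u assume u: "u \<in> V"
  interpret f: Vector_Spaces.linear scale scale f by (rule lin)
  obtain B where B: "B \<subseteq> V" "independent B" "V \<subseteq> span B" "card B = dim V"
    by (rule basis_exists)
  have finB: "finite B"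
    using independent_span_bound[OF fin B(2)] B(1) VS by auto
  have spanB: "span B \<subseteq> V" using B(1) V by (rule span_minimal)
  have indf: "independent (f ` B)"
    using f.independent_injective_image[OF B(2)] inj spanB inj_on_subset by blast
  have cardf: "card (f ` B) = card B"
    using inj B(1) by (simp add: card_image inj_on_subset)
  have "u \<in> span (f ` B)"
  proof (rule ccontr)
    assume nu: "u \<notin> span (f ` B)"
    have "card (insert u (f ` B)) \<le> card B"
      using independent_span_bound[OF finB independent_insertI[OF nu indf]] u fV B(1,3) by auto
    moreover have "u \<notin> f ` B" using nu span_base by blast
    then have "card (insert u (f ` B)) = card B + 1"
      using finB cardf by simp
    ultimately show False by simp
  qed
  then have "u \<in> f ` span B" by (simp add: f.span_image)
  then show "u \<in> f ` V" using spanB by blast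
qed

definition vec_scale :: "complex \<Rightarrow> vec \<Rightarrow> vec" where "vec_scale c f = (\<lambda>\<sigma>. c * f \<sigma>)"

global_interpretation vecs: vector_space vec_scale
  by unfold_locales (auto simp: vec_scale_def fun_eq_iff algebra_simps)

lemma sum_fun_apply: "(sum h I) x = (\<Sum>i\<in>I. h i x)"
  by (induct I rule: infinite_finite_induct) auto

context
  fixes L :: nat and d :: "site \<Rightarrow> nat"
begin

definition restrict_vec :: "vec \<Rightarrow> vec" where
  "restrict_vec f = (\<lambda>\<sigma>. if \<sigma> \<in> cfgs L d then f \<sigma> else 0)"

definition supported :: "vec set" where
  "supported = {f. \<forall>\<sigma>. \<sigma> \<notin> cfgs L d \<longrightarrow> f \<sigma> = 0}"

lemma restrict_vec_eq: "vec_eq L d (restrict_vec f) f"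
  by (simp add: restrict_vec_def vec_eq_def)

lemma restrict_vec_supported: "restrict_vec f \<in> supported"
  by (simp add: restrict_vec_def supported_def)

lemma supported_in_span: "supported \<subseteq> vecs.span (basis_vec ` cfgs L d)"
proof
  fix f assume f: "f \<in> supported"
  have "f = (\<Sum>\<sigma>\<in>cfgs L d. vec_scale (f \<sigma>) (basis_vec \<sigma>))"
  proof
    fix x
    have "(\<Sum>\<sigma>\<in>cfgs L d. vec_scale (f \<sigma>) (basis_vec \<sigma>)) x = (\<Sum>\<sigma>\<in>cfgs L d. if \<sigma> = x then f \<sigma> else 0)"
      unfolding sum_fun_apply vec_scale_def basis_vec_def by (rule sum.cong) auto
    also have "\<dots> = f x" using f finite_cfgs[of L d] by (auto simp: supported_def)
    finally show "f x = (\<Sum>\<sigma>\<in>cfgs L d. vec_scale (f \<sigma>) (basis_vec \<sigma>)) x" by simp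
  qed
  also have "\<dots> \<in> vecs.span (basis_vec ` cfgs L d)"
    by (intro vecs.span_sum vecs.span_scale vecs.span_base) auto
  finally show "f \<in> vecs.span (basis_vec ` cfgs L d)" .
qed

text \<open>\<open>G\<close> is injective on \<open>ker P\<close> and maps it into itself, so in finite dimension it is onto \<open>ker P\<close>.\<close>
lemma proj_null_in_range:
  assumes hG: "herm L d G" and hP: "herm L d P" and iP: "idem L d P"
    and kP: "\<And>\<psi>. vec_eq L d (apply_op L d G \<psi>) (\<lambda>_. 0) \<longleftrightarrow> vec_eq L d (apply_op L d P \<psi>) \<psi>"
    and u0: "vec_eq L d (apply_op L d P u) (\<lambda>_. 0)"
  shows "\<exists>w. vec_eq L d u (apply_op L d G w)"
proof -
  let ?a = "apply_op L d"
  define g where "g f = restrict_vec (?a G f)" for f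
  define V where "V = {f \<in> supported. vec_eq L d (?a P f) (\<lambda>_. 0)}"
  have m: "module vec_scale" using vecs.vector_space_axioms module_iff_vector_space by blast
  have lin: "Vector_Spaces.linear vec_scale vec_scale g"
    unfolding Vector_Spaces.linear_def module_hom_def module_hom_axioms_def
    by (auto simp: m vecs.vector_space_axioms g_def restrict_vec_def vec_scale_def
        apply_op_add apply_op_scale[unfolded vec_scale_def] fun_eq_iff)
  interpret g: Vector_Spaces.linear vec_scale vec_scale g by (rule lin)
  have subV: "vecs.subspace V"
    by (rule vecs.subspaceI)
      (auto simp: V_def supported_def vec_scale_def vec_eq_def apply_op_add apply_op_scale[unfolded vec_scale_def]
        zero_fun_def apply_op_def distrib_left sum.distrib,
       simp add: mult.left_commute sum_distrib_left[symmetric])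
  have PG: "vec_eq L d (?a P (?a G f)) (\<lambda>_. 0)" for f
  proof (rule vec_eq_inner)
    fix \<phi>
    have "vec_eq L d (?a G (?a P \<phi>)) (\<lambda>_. 0)"
      using kP[of "?a P \<phi>"] iP by (simp add: idem_def)
    then have "inner L d (?a G (?a P \<phi>)) f = inner L d (\<lambda>_. 0) f"
      by (rule inner_cong[OF _ vec_eq_refl])
    then have "inner L d (?a G (?a P \<phi>)) f = 0" by (simp add: inner_def)
    then show "inner L d \<phi> (?a P (?a G f)) = inner L d \<phi> (\<lambda>_. 0)"
      using hP hG by (simp add: herm_def)
  qed
  have gV: "g ` V \<subseteq> V"
    using PG apply_op_cong[OF restrict_vec_eq] by (auto simp: V_def g_def restrict_vec_supported)
  have injV: "inj_on g V"
  proof (rule inj_onI)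
    fix x y assume x: "x \<in> V" and y: "y \<in> V" and e: "g x = g y"
    have z: "x - y \<in> V" using vecs.subspace_diff[OF subV x y] .
    have "g (x - y) = 0" using e by (simp add: g.diff)
    then have "vec_eq L d (?a G (x - y)) (\<lambda>_. 0)"
      unfolding g_def restrict_vec_def vec_eq_def fun_eq_iff zero_fun_def by metis
    then have "vec_eq L d (?a P (x - y)) (x - y)" using kP by blast
    then have "x - y = 0" using z by (auto simp: V_def supported_def vec_eq_def fun_eq_iff)
    then show "x = y" by simp
  qed
  have "restrict_vec u \<in> V"
    using u0 apply_op_cong[OF restrict_vec_eq[of u]] by (auto simp: V_def restrict_vec_supported)
  then obtain w where "restrict_vec u = g w"
    using vecs.subspace_subset_image_of_inj_on[OF lin subV _ _ gV injV, of "basis_vec ` cfgs L d"]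
      supported_in_span finite_cfgs by (auto simp: V_def)
  then have "vec_eq L d u (?a G w)"
    unfolding g_def restrict_vec_def vec_eq_def fun_eq_iff by metis
  then show ?thesis by blast
qed

end

context
  fixes L :: nat and d :: "site \<Rightarrow> nat"
begin

lemma form_expand_lincomb:
  "inner L d ((\<lambda>\<sigma>. \<alpha> * w \<sigma>) + (\<lambda>\<sigma>. \<gamma> * z \<sigma>)) (apply_op L d G ((\<lambda>\<sigma>. \<alpha> * w \<sigma>) + (\<lambda>\<sigma>. \<gamma> * z \<sigma>)))
   = cnj \<alpha> * \<alpha> * inner L d w (apply_op L d G w) + cnj \<alpha> * \<gamma> * inner L d w (apply_op L d G z)
     + cnj \<gamma> * \<alpha> * inner L d z (apply_op L d G w) + cnj \<gamma> * \<gamma> * inner L d z (apply_op L d G z)"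
  by (simp add: apply_op_add apply_op_scale inner_add_left inner_add_right inner_scale_left
      inner_scale_right algebra_simps)

text \<open>Positivity of the form at \<open>\<alpha> w + \<gamma> z\<close> with \<open>\<alpha> = c\<close>, \<open>\<gamma> = -\<beta>\<^sup>*\<close>; if \<open>c = 0\<close>,
  with \<open>\<alpha> = 1\<close> and \<open>\<gamma>\<close> a large multiple of \<open>-\<beta>\<^sup>*\<close>.\<close>
lemma psd_cauchy_schwarz:
  assumes pG: "psd L d G"
  shows "(cmod (inner L d w (apply_op L d G z)))\<^sup>2
          \<le> Re (inner L d w (apply_op L d G w)) * Re (inner L d z (apply_op L d G z))"
proof -
  have hG: "herm L d G" by (rule psd_herm[OF pG])
  have pos: "\<And>v. inner L d v (apply_op L d G v) \<in> \<real> \<and> 0 \<le> Re (inner L d v (apply_op L d G v))"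
    using pG by (simp add: psd_def)
  define a where "a = Re (inner L d w (apply_op L d G w))"
  define c where "c = Re (inner L d z (apply_op L d G z))"
  define \<beta> where "\<beta> = inner L d w (apply_op L d G z)"
  have ea: "inner L d w (apply_op L d G w) = of_real a"
    using pos[of w] by (simp add: a_def complex_is_Real_iff complex_eq_iff)
  have ec: "inner L d z (apply_op L d G z) = of_real c"
    using pos[of z] by (simp add: c_def complex_is_Real_iff complex_eq_iff)
  have eb: "inner L d z (apply_op L d G w) = cnj \<beta>"
    unfolding \<beta>_def using hG by (metis herm_def inner_cnj)
  have a0: "0 \<le> a" and c0: "0 \<le> c" using pos[of w] pos[of z] by (auto simp: a_def c_def)
  have F: "0 \<le> Re (cnj \<alpha> * \<alpha> * of_real a + cnj \<alpha> * \<gamma> * \<beta> + cnj \<gamma> * \<alpha> * cnj \<beta> + cnj \<gamma> * \<gamma> * of_real c)" for \<alpha> \<gamma>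
    using pos[of "(\<lambda>\<sigma>. \<alpha> * w \<sigma>) + (\<lambda>\<sigma>. \<gamma> * z \<sigma>)"]
    unfolding form_expand_lincomb ea ec eb \<beta>_def[symmetric] by simp
  have nb: "(cmod \<beta>)\<^sup>2 = Re \<beta> * Re \<beta> + Im \<beta> * Im \<beta>"
    by (simp add: cmod_def power2_eq_square)
  show ?thesis
  proof (cases "c = 0")
    case False
    then have cp: "c > 0" using c0 by simp
    have "0 \<le> Re (cnj (of_real c) * of_real c * of_real a + cnj (of_real c) * (- cnj \<beta>) * \<beta>
        + cnj (- cnj \<beta>) * of_real c * cnj \<beta> + cnj (- cnj \<beta>) * (- cnj \<beta>) * of_real c)"
      by (rule F)
    then have "0 \<le> c * c * a - c * (cmod \<beta>)\<^sup>2"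
      by (simp add: nb algebra_simps)
    then have "c * (cmod \<beta>)\<^sup>2 \<le> c * (c * a)" by (simp add: algebra_simps)
    then have "(cmod \<beta>)\<^sup>2 \<le> c * a" using cp by simp
    then show ?thesis by (simp add: \<beta>_def a_def c_def mult.commute)
  next
    case True
    show ?thesis
    proof (rule ccontr)
      assume "\<not> ?thesis"
      then have bp: "(cmod \<beta>)\<^sup>2 > 0" using True by (simp add: \<beta>_def c_def)
      define t where "t = (a + 1) / (2 * (cmod \<beta>)\<^sup>2)"
      have "0 \<le> Re (cnj 1 * 1 * of_real a + cnj 1 * (- of_real t * cnj \<beta>) * \<beta>
          + cnj (- of_real t * cnj \<beta>) * 1 * cnj \<beta> + cnj (- of_real t * cnj \<beta>) * (- of_real t * cnj \<beta>) * of_real c)"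
        by (rule F)
      then have "0 \<le> a - 2 * t * (cmod \<beta>)\<^sup>2"
        using True by (simp add: nb algebra_simps)
      moreover have "2 * t * (cmod \<beta>)\<^sup>2 = a + 1" using bp by (simp add: t_def)
      ultimately show False by simp
    qed
  qed
qed

lemma form_le_norm_sq:
  assumes pG: "psd L d G" and sG: "op_le L d G (mmult L d G G)"
  shows "Re (inner L d v (apply_op L d G v)) \<le> (vnorm L d (apply_op L d G v))\<^sup>2"
proof -
  let ?a = "apply_op L d"
  have "0 \<le> Re (inner L d v (?a (\<lambda>\<sigma> \<tau>. mmult L d G G \<sigma> \<tau> - G \<sigma> \<tau>) v))"
    using sG by (simp add: op_le_def psd_def)
  also have "?a (\<lambda>\<sigma> \<tau>. mmult L d G G \<sigma> \<tau> - G \<sigma> \<tau>) v = ?a (mmult L d G G) v - ?a G v"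
    by (simp add: apply_op_def left_diff_distrib sum_subtractf fun_eq_iff)
  also have "inner L d v (?a (mmult L d G G) v - ?a G v) = inner L d v (?a G (?a G v)) - inner L d v (?a G v)"
    using apply_op_mmult_vec[of L d G G v] by (simp add: inner_diff_right) (rule inner_cong, auto)
  also have "inner L d v (?a G (?a G v)) = inner L d (?a G v) (?a G v)"
    using psd_herm[OF pG] by (simp add: herm_def)
  finally show ?thesis by (simp add: vnorm_sq)
qed

lemma le_of_sq_le_mult:
  fixes a b c :: real
  assumes "0 \<le> a" "0 \<le> c" "a \<le> b" "b * b \<le> a * c"
  shows "b \<le> c"
proof (cases "b \<le> 0")
  case False
  have "a * b \<le> b * b" using assms(3) False by (simp add: mult_right_mono)
  then have "a * b \<le> a * c" using assms(4) by linarith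
  moreover have "0 < a"
  proof (rule ccontr)
    assume "\<not> 0 < a"
    then have "b * b \<le> 0" using assms(1,4) by simp
    moreover have "0 < b * b" using False by simp
    ultimately show False by simp
  qed
  ultimately show ?thesis by simp
next
  case True
  then show ?thesis using assms(2) by linarith
qed

text \<open>Writing \<open>(1 - P) x = G w\<close>, Cauchy-Schwarz for the form of \<open>G\<close> gives
  \<open>\<parallel>G w\<parallel>\<^sup>4 = \<langle>w, G (G w)\<rangle>\<^sup>2 \<le> \<langle>w, G w\<rangle> \<langle>G w, G G w\<rangle> = \<langle>w, G w\<rangle> \<langle>x, G x\<rangle>\<close>,
  and \<open>G \<le> G\<^sup>2\<close> gives \<open>\<langle>w, G w\<rangle> \<le> \<parallel>G w\<parallel>\<^sup>2\<close>.\<close>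
lemma compl_proj_norm_le_form:
  assumes pG: "psd L d G" and sG: "op_le L d G (mmult L d G G)"
    and hP: "herm L d P" and iP: "idem L d P"
    and kP: "\<And>\<psi>. vec_eq L d (apply_op L d G \<psi>) (\<lambda>_. 0) \<longleftrightarrow> vec_eq L d (apply_op L d P \<psi>) \<psi>"
  shows "(vnorm L d (x - apply_op L d P x))\<^sup>2 \<le> Re (inner L d x (apply_op L d G x))"
proof -
  let ?a = "apply_op L d"
  have hG: "herm L d G" by (rule psd_herm[OF pG])
  have pos: "\<And>v. inner L d v (?a G v) \<in> \<real> \<and> 0 \<le> Re (inner L d v (?a G v))"
    using pG by (simp add: psd_def)
  define u where "u = x - ?a P x"
  have GPx: "vec_eq L d (?a G (?a P x)) (\<lambda>_. 0)"
    using kP[of "?a P x"] iP by (simp add: idem_def)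
  have Pu: "vec_eq L d (?a P u) (\<lambda>_. 0)"
    using iP by (simp add: u_def apply_op_diff idem_def vec_eq_def)
  have Gu: "vec_eq L d (?a G u) (?a G x)"
    using GPx by (simp add: u_def apply_op_diff vec_eq_def)
  have form_u: "inner L d u (?a G u) = inner L d x (?a G x)"
  proof -
    have "inner L d u (?a G u) = inner L d x (?a G u) - inner L d (?a G (?a P x)) u"
      using hG by (simp add: u_def inner_diff_left herm_def)
    also have "\<dots> = inner L d x (?a G x)"
      using inner_cong[OF GPx vec_eq_refl, of u] inner_cong[OF vec_eq_refl Gu, of x] by (simp add: inner_def)
    finally show ?thesis .
  qed
  obtain w where w: "vec_eq L d u (?a G w)"
    using proj_null_in_range[OF hG hP iP kP Pu] by blast
  define b1 where "b1 = Re (inner L d w (?a G w))"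
  define b2 where "b2 = (vnorm L d u)\<^sup>2"
  define b3 where "b3 = Re (inner L d x (?a G x))"
  have b1_nonneg: "0 \<le> b1" and b3_nonneg: "0 \<le> b3"
    using pos by (simp_all add: b1_def b3_def)
  have b12: "b1 \<le> b2"
    using form_le_norm_sq[OF pG sG, of w] vnorm_cong[OF w] by (simp add: b1_def b2_def)
  have b2_sq: "b2 * b2 \<le> b1 * b3"
  proof -
    have "inner L d w (?a G (?a G w)) = inner L d (?a G w) (?a G w)"
      using hG by (simp add: herm_def)
    also have "\<dots> = of_real b2"
      using inner_cong[OF w w] by (simp add: inner_self b2_def)
    finally have e: "inner L d w (?a G (?a G w)) = of_real b2" .
    have "0 \<le> b2" by (simp add: b2_def)
    then have "b2 * b2 = (cmod (inner L d w (?a G (?a G w))))\<^sup>2"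
      unfolding e by (simp add: power2_eq_square)
    also have "\<dots> \<le> b1 * Re (inner L d (?a G w) (?a G (?a G w)))"
      unfolding b1_def by (rule psd_cauchy_schwarz[OF pG])
    also have "inner L d (?a G w) (?a G (?a G w)) = inner L d u (?a G u)"
      using w apply_op_cong[OF w, of G] by (intro inner_cong) (auto simp: vec_eq_def)
    finally show ?thesis using form_u by (simp add: b3_def)
  qed
  have "b2 \<le> b3" by (rule le_of_sq_le_mult[OF b1_nonneg b3_nonneg b12 b2_sq])
  then show ?thesis by (simp add: b2_def b3_def u_def)
qed

end

section \<open>Local operators\<close>

lemma merge_in_cfgs:
  assumes "A \<subseteq> sites L" "\<alpha> \<in> cfgs_on d A" "\<gamma> \<in> cfgs_on d (sites L - A)"
  shows "merge A \<alpha> \<gamma> \<in> cfgs L d"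
  unfolding cfgs_def
proof (rule cfgs_onI)
  fix u assume "u \<in> sites L"
  then show "merge A \<alpha> \<gamma> u < d u"
    using assms cfgs_on_in[of \<alpha> d A u] cfgs_on_in[of \<gamma> d "sites L - A" u] by (auto simp: merge_def)
next
  fix u assume "u \<notin> sites L"
  then show "merge A \<alpha> \<gamma> u = 0"
    using assms cfgs_on_out[of \<gamma> d "sites L - A" u] by (auto simp: merge_def)
qed

lemma merge_cfgs_mixed:
  assumes "A \<subseteq> sites L" "\<sigma> \<in> cfgs L d" "\<mu> \<in> cfgs L d"
  shows "merge A \<mu> \<sigma> \<in> cfgs L d"
  unfolding cfgs_def
proof (rule cfgs_onI)
  fix u assume "u \<in> sites L"
  then show "merge A \<mu> \<sigma> u < d u"
    using assms cfgs_on_in[of \<sigma> d "sites L" u] cfgs_on_in[of \<mu> d "sites L" u]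
    by (auto simp: merge_def cfgs_def)
next
  fix u assume "u \<notin> sites L"
  then show "merge A \<mu> \<sigma> u = 0"
    using assms cfgs_on_out[of \<sigma> d "sites L" u] by (auto simp: merge_def cfgs_def)
qed

definition restrict_cfg :: "site set \<Rightarrow> cfg \<Rightarrow> cfg" where
  "restrict_cfg S \<sigma> = (\<lambda>u. if u \<in> S then \<sigma> u else 0)"

lemma restrict_cfg_in: "\<sigma> \<in> cfgs L d \<Longrightarrow> S \<subseteq> sites L \<Longrightarrow> restrict_cfg S \<sigma> \<in> cfgs_on d S"
  by (rule cfgs_onI) (auto simp: restrict_cfg_def cfgs_def dest: cfgs_on_in)

lemma merge_restrict_cfg: "\<sigma> \<in> cfgs L d \<Longrightarrow> merge A (restrict_cfg A \<sigma>) (restrict_cfg (sites L - A) \<sigma>) = \<sigma>"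
  by (auto simp: fun_eq_iff merge_def restrict_cfg_def cfgs_def dest: cfgs_on_out)

lemma restrict_cfg_merge1: "\<alpha> \<in> cfgs_on d A \<Longrightarrow> restrict_cfg A (merge A \<alpha> \<gamma>) = \<alpha>"
  by (auto simp: fun_eq_iff merge_def restrict_cfg_def dest: cfgs_on_out)

lemma restrict_cfg_merge2: "\<gamma> \<in> cfgs_on d (sites L - A) \<Longrightarrow> restrict_cfg (sites L - A) (merge A \<alpha> \<gamma>) = \<gamma>"
  by (auto simp: fun_eq_iff merge_def restrict_cfg_def dest: cfgs_on_out)

lemma sum_cfgs_split:
  assumes A: "A \<subseteq> sites L"
  shows "(\<Sum>\<sigma>\<in>cfgs L d. f \<sigma>) = (\<Sum>\<alpha>\<in>cfgs_on d A. \<Sum>\<gamma>\<in>cfgs_on d (sites L - A). f (merge A \<alpha> \<gamma>))"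
proof -
  have bij: "bij_betw (\<lambda>(\<alpha>, \<gamma>). merge A \<alpha> \<gamma>) (cfgs_on d A \<times> cfgs_on d (sites L - A)) (cfgs L d)"
  proof (rule bij_betw_byWitness[where f' = "\<lambda>\<sigma>. (restrict_cfg A \<sigma>, restrict_cfg (sites L - A) \<sigma>)"])
    show "\<forall>x\<in>cfgs_on d A \<times> cfgs_on d (sites L - A). (\<lambda>\<sigma>. (restrict_cfg A \<sigma>, restrict_cfg (sites L - A) \<sigma>)) ((\<lambda>(\<alpha>, \<gamma>). merge A \<alpha> \<gamma>) x) = x"
      by (auto simp: restrict_cfg_merge1 restrict_cfg_merge2)
    show "\<forall>y\<in>cfgs L d. (\<lambda>(\<alpha>, \<gamma>). merge A \<alpha> \<gamma>) ((\<lambda>\<sigma>. (restrict_cfg A \<sigma>, restrict_cfg (sites L - A) \<sigma>)) y) = y"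
      by (auto simp: merge_restrict_cfg)
    show "(\<lambda>(\<alpha>, \<gamma>). merge A \<alpha> \<gamma>) ` (cfgs_on d A \<times> cfgs_on d (sites L - A)) \<subseteq> cfgs L d"
      using merge_in_cfgs[OF A] by auto
    show "(\<lambda>\<sigma>. (restrict_cfg A \<sigma>, restrict_cfg (sites L - A) \<sigma>)) ` cfgs L d \<subseteq> cfgs_on d A \<times> cfgs_on d (sites L - A)"
      using restrict_cfg_in A by auto
  qed
  have "(\<Sum>\<sigma>\<in>cfgs L d. f \<sigma>) = (\<Sum>x\<in>cfgs_on d A \<times> cfgs_on d (sites L - A). f ((\<lambda>(\<alpha>, \<gamma>). merge A \<alpha> \<gamma>) x))"
    using sum.reindex_bij_betw[OF bij, of f] by simp
  also have "\<dots> = (\<Sum>\<alpha>\<in>cfgs_on d A. \<Sum>\<gamma>\<in>cfgs_on d (sites L - A). f (merge A \<alpha> \<gamma>))"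
    by (simp add: sum.cartesian_product split_def)
  finally show ?thesis .
qed

lemma acts_on_adjoint:
  assumes X: "acts_on L d A X"
  shows "acts_on L d A (adjoint X)"
  unfolding acts_on_def
proof (intro ballI conjI impI)
  fix \<sigma> \<tau> assume s: "\<sigma> \<in> cfgs L d" and t: "\<tau> \<in> cfgs L d"
  { assume "\<exists>u\<in>sites L - A. \<sigma> u \<noteq> \<tau> u"
    then have "\<exists>u\<in>sites L - A. \<tau> u \<noteq> \<sigma> u" by metis
    then have "X \<tau> \<sigma> = 0" using X s t unfolding acts_on_def by blast
    then show "adjoint X \<sigma> \<tau> = 0" by (simp add: adjoint_def) }
  fix \<sigma>' \<tau>' assume s': "\<sigma>' \<in> cfgs L d" and t': "\<tau>' \<in> cfgs L d"
    and h: "(\<forall>u\<in>A. \<sigma>' u = \<sigma> u \<and> \<tau>' u = \<tau> u) \<and> (\<forall>u\<in>sites L - A. \<sigma> u = \<tau> u \<and> \<sigma>' u = \<tau>' u)"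
  have h2: "(\<forall>u\<in>A. \<tau>' u = \<tau> u \<and> \<sigma>' u = \<sigma> u) \<and> (\<forall>u\<in>sites L - A. \<tau> u = \<sigma> u \<and> \<tau>' u = \<sigma>' u)"
    using h by metis
  have "X \<tau>' \<sigma>' = X \<tau> \<sigma>" using X s t s' t' h2 unfolding acts_on_def by blast
  then show "adjoint X \<sigma>' \<tau>' = adjoint X \<sigma> \<tau>" by (simp add: adjoint_def)
qed

lemma acts_on_zero_outside:
  assumes "acts_on L d A X" "\<sigma> \<in> cfgs L d" "\<tau> \<in> cfgs L d" "u \<in> sites L" "u \<notin> A" "\<sigma> u \<noteq> \<tau> u"
  shows "X \<sigma> \<tau> = 0"
  using assms unfolding acts_on_def by blast

lemma acts_on_local:
  assumes "acts_on L d A X" "\<sigma> \<in> cfgs L d" "\<tau> \<in> cfgs L d" "\<sigma>' \<in> cfgs L d" "\<tau>' \<in> cfgs L d"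
    "\<And>u. u \<in> A \<Longrightarrow> \<sigma>' u = \<sigma> u \<and> \<tau>' u = \<tau> u"
    "\<And>u. u \<in> sites L \<Longrightarrow> u \<notin> A \<Longrightarrow> \<sigma> u = \<tau> u \<and> \<sigma>' u = \<tau>' u"
  shows "X \<sigma>' \<tau>' = X \<sigma> \<tau>"
proof -
  have h: "(\<forall>u\<in>A. \<sigma>' u = \<sigma> u \<and> \<tau>' u = \<tau> u) \<and> (\<forall>u\<in>sites L - A. \<sigma> u = \<tau> u \<and> \<sigma>' u = \<tau>' u)"
    using assms(6,7) by blast
  show ?thesis using assms(1-5) h unfolding acts_on_def by blast
qed

lemma sum_cfgs_single:
  assumes "\<rho>1 \<in> cfgs L d" "\<And>\<rho>. \<rho> \<in> cfgs L d \<Longrightarrow> \<rho> \<noteq> \<rho>1 \<Longrightarrow> X \<sigma> \<rho> * Y \<rho> \<mu> = 0"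
  shows "(\<Sum>\<rho>\<in>cfgs L d. X \<sigma> \<rho> * Y \<rho> \<mu>) = X \<sigma> \<rho>1 * Y \<rho>1 \<mu>"
  using assms finite_cfgs[of L d] by (subst sum.remove[of _ \<rho>1]) (auto intro!: sum.neutral)

lemma mmult_disjoint_single:
  assumes X: "acts_on L d A X" and Y: "acts_on L d A' Y" and dj: "A \<inter> A' = {}"
    and AS: "A \<subseteq> sites L" and s: "\<sigma> \<in> cfgs L d" and m: "\<mu> \<in> cfgs L d"
  shows "(\<Sum>\<rho>\<in>cfgs L d. X \<sigma> \<rho> * Y \<rho> \<mu>) = X \<sigma> (merge A \<mu> \<sigma>) * Y (merge A \<mu> \<sigma>) \<mu>"
proof (rule sum_cfgs_single[OF merge_cfgs_mixed[OF AS s m]])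
  fix \<rho> assume r: "\<rho> \<in> cfgs L d" and ne: "\<rho> \<noteq> merge A \<mu> \<sigma>"
  then obtain u where u: "\<rho> u \<noteq> merge A \<mu> \<sigma> u" by (metis ext)
  have "u \<in> sites L"
    using u r s m cfgs_on_out[of _ d "sites L" u] unfolding cfgs_def merge_def by (cases "u \<in> A") metis+
  show "X \<sigma> \<rho> * Y \<rho> \<mu> = 0"
  proof (cases "u \<in> A")
    case True
    then have "Y \<rho> \<mu> = 0" using u dj \<open>u \<in> sites L\<close>
      by (intro acts_on_zero_outside[OF Y r m, of u]) (auto simp: merge_def)
    then show ?thesis by simp
  next
    case False
    then have "X \<sigma> \<rho> = 0" using u \<open>u \<in> sites L\<close>
      by (intro acts_on_zero_outside[OF X s r, of u]) (auto simp: merge_def)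
    then show ?thesis by simp
  qed
qed

lemma disjoint_commute:
  assumes X: "acts_on L d A X" and Y: "acts_on L d A' Y" and dj: "A \<inter> A' = {}"
    and AS: "A \<subseteq> sites L" and AS': "A' \<subseteq> sites L"
  shows "commute L d X Y"
  unfolding commute_def op_eq_def
proof (intro ballI)
  fix \<sigma> \<mu> assume s: "\<sigma> \<in> cfgs L d" and m: "\<mu> \<in> cfgs L d"
  define \<rho>1 where "\<rho>1 = merge A \<mu> \<sigma>"
  define \<rho>2 where "\<rho>2 = merge A' \<mu> \<sigma>"
  have r1: "\<rho>1 \<in> cfgs L d" unfolding \<rho>1_def by (rule merge_cfgs_mixed[OF AS s m])
  have r2: "\<rho>2 \<in> cfgs L d" unfolding \<rho>2_def by (rule merge_cfgs_mixed[OF AS' s m])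
  have "X \<sigma> \<rho>1 * Y \<rho>1 \<mu> = Y \<sigma> \<rho>2 * X \<rho>2 \<mu>"
  proof (cases "\<exists>u\<in>sites L. u \<notin> A \<and> u \<notin> A' \<and> \<sigma> u \<noteq> \<mu> u")
    case True
    then obtain u where u: "u \<in> sites L" "u \<notin> A" "u \<notin> A'" "\<sigma> u \<noteq> \<mu> u" by blast
    have "Y \<rho>1 \<mu> = 0" using u by (intro acts_on_zero_outside[OF Y r1 m, of u]) (auto simp: \<rho>1_def merge_def)
    moreover have "X \<rho>2 \<mu> = 0" using u by (intro acts_on_zero_outside[OF X r2 m, of u]) (auto simp: \<rho>2_def merge_def)
    ultimately show ?thesis by simp
  next
    case False
    then have agree: "\<And>u. u \<in> sites L \<Longrightarrow> u \<notin> A \<Longrightarrow> u \<notin> A' \<Longrightarrow> \<sigma> u = \<mu> u" by blast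
    have "X \<rho>2 \<mu> = X \<sigma> \<rho>1"
      by (rule acts_on_local[OF X s r1 r2 m]) (use dj agree in \<open>auto simp: \<rho>1_def \<rho>2_def merge_def\<close>)
    moreover have "Y \<rho>1 \<mu> = Y \<sigma> \<rho>2"
      by (rule acts_on_local[OF Y s r2 r1 m]) (use dj agree in \<open>auto simp: \<rho>1_def \<rho>2_def merge_def\<close>)
    ultimately show ?thesis by simp
  qed
  moreover have "A' \<inter> A = {}" using dj by blast
  ultimately show "mmult L d X Y \<sigma> \<mu> = mmult L d Y X \<sigma> \<mu>"
    using s m mmult_disjoint_single[OF X Y dj AS s m] mmult_disjoint_single[OF Y X _ AS' s m]
    by (simp add: mmult_def \<rho>1_def \<rho>2_def)
qed

lemma zero_cfg_in: "(\<And>u. u \<in> sites L \<Longrightarrow> 1 \<le> d u) \<Longrightarrow> (\<lambda>_. 0) \<in> cfgs_on d (sites L - A)"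
  by (rule cfgs_onI) force+

lemma inner_basis_vec: "\<rho> \<in> cfgs L d \<Longrightarrow> inner L d (basis_vec \<rho>) f = f \<rho>"
proof -
  assume r: "\<rho> \<in> cfgs L d"
  have "inner L d (basis_vec \<rho>) f = (\<Sum>\<sigma>'\<in>cfgs L d. if \<rho> = \<sigma>' then f \<sigma>' else 0)"
    unfolding inner_def by (intro sum.cong) (auto simp: basis_vec_def)
  then show ?thesis using r finite_cfgs[of L d] by simp
qed

lemma herm_matrix:
  assumes "herm L d M" "\<sigma> \<in> cfgs L d" "\<tau> \<in> cfgs L d"
  shows "M \<tau> \<sigma> = cnj (M \<sigma> \<tau>)"
proof -
  have "M \<tau> \<sigma> = inner L d (basis_vec \<tau>) (apply_op L d M (basis_vec \<sigma>))"
    using assms by (simp add: inner_basis_vec apply_op_basis_vec)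
  also have "\<dots> = inner L d (apply_op L d M (basis_vec \<tau>)) (basis_vec \<sigma>)" using assms(1) by (simp add: herm_def)
  also have "\<dots> = cnj (inner L d (basis_vec \<sigma>) (apply_op L d M (basis_vec \<tau>)))" by (rule inner_cnj)
  also have "\<dots> = cnj (M \<sigma> \<tau>)" using assms by (simp add: inner_basis_vec apply_op_basis_vec)
  finally show ?thesis .
qed

lemma idem_matrix:
  assumes "idem L d M" "\<tau> \<in> cfgs L d" "\<tau>' \<in> cfgs L d"
  shows "(\<Sum>\<mu>\<in>cfgs L d. M \<tau> \<mu> * M \<mu> \<tau>') = M \<tau> \<tau>'"
proof -
  have "(\<Sum>\<mu>\<in>cfgs L d. M \<tau> \<mu> * M \<mu> \<tau>') = apply_op L d M (apply_op L d M (basis_vec \<tau>')) \<tau>"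
    using assms by (simp add: apply_op_def[of L d M "apply_op L d M (basis_vec \<tau>')"] apply_op_basis_vec)
  also have "\<dots> = apply_op L d M (basis_vec \<tau>') \<tau>" using assms by (simp add: idem_def vec_eq_def)
  also have "\<dots> = M \<tau> \<tau>'" using assms by (simp add: apply_op_basis_vec)
  finally show ?thesis .
qed

lemma sum_swap3: "(\<Sum>\<mu>\<in>M. \<Sum>\<tau>\<in>T. \<Sum>\<tau>'\<in>T'. F \<tau> \<tau>' \<mu>) = (\<Sum>\<tau>\<in>T. \<Sum>\<tau>'\<in>T'. \<Sum>\<mu>\<in>M. F \<tau> \<tau>' \<mu>)"
  by (subst sum.swap) (rule sum.cong[OF refl], rule sum.swap)

lemma sum_norm_sq_mult_proj:
  assumes hQ: "herm L d Q" and iQ: "idem L d Q"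
  shows "(\<Sum>\<mu>\<in>cfgs L d. (\<Sum>\<tau>\<in>cfgs L d. X \<sigma> \<tau> * Q \<tau> \<mu>) * cnj (\<Sum>\<tau>\<in>cfgs L d. X \<sigma> \<tau> * Q \<tau> \<mu>))
       = (\<Sum>\<tau>\<in>cfgs L d. \<Sum>\<tau>'\<in>cfgs L d. X \<sigma> \<tau> * cnj (X \<sigma> \<tau>') * Q \<tau> \<tau>')"
proof -
  let ?C = "cfgs L d"
  have QQ: "(\<Sum>\<mu>\<in>?C. Q \<tau> \<mu> * cnj (Q \<tau>' \<mu>)) = Q \<tau> \<tau>'" if "\<tau> \<in> ?C" "\<tau>' \<in> ?C" for \<tau> \<tau>'
  proof -
    have "(\<Sum>\<mu>\<in>?C. Q \<tau> \<mu> * cnj (Q \<tau>' \<mu>)) = (\<Sum>\<mu>\<in>?C. Q \<tau> \<mu> * Q \<mu> \<tau>')"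
      using herm_matrix[OF hQ that(2)] by (intro sum.cong) auto
    then show ?thesis using idem_matrix[OF iQ that] by simp
  qed
  have "(\<Sum>\<mu>\<in>?C. (\<Sum>\<tau>\<in>?C. X \<sigma> \<tau> * Q \<tau> \<mu>) * cnj (\<Sum>\<tau>\<in>?C. X \<sigma> \<tau> * Q \<tau> \<mu>))
      = (\<Sum>\<mu>\<in>?C. \<Sum>\<tau>\<in>?C. \<Sum>\<tau>'\<in>?C. (X \<sigma> \<tau> * cnj (X \<sigma> \<tau>')) * (Q \<tau> \<mu> * cnj (Q \<tau>' \<mu>)))"
    unfolding cnj_sum sum_product by (simp add: mult_ac)
  also have "\<dots> = (\<Sum>\<tau>\<in>?C. \<Sum>\<tau>'\<in>?C. \<Sum>\<mu>\<in>?C. (X \<sigma> \<tau> * cnj (X \<sigma> \<tau>')) * (Q \<tau> \<mu> * cnj (Q \<tau>' \<mu>)))"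
    by (rule sum_swap3)
  also have "\<dots> = (\<Sum>\<tau>\<in>?C. \<Sum>\<tau>'\<in>?C. (X \<sigma> \<tau> * cnj (X \<sigma> \<tau>')) * (\<Sum>\<mu>\<in>?C. Q \<tau> \<mu> * cnj (Q \<tau>' \<mu>)))"
    by (simp only: sum_distrib_left)
  also have "\<dots> = (\<Sum>\<tau>\<in>?C. \<Sum>\<tau>'\<in>?C. X \<sigma> \<tau> * cnj (X \<sigma> \<tau>') * Q \<tau> \<tau>')"
    by (intro sum.cong refl) (simp add: QQ)
  finally show ?thesis .
qed

context
  fixes L :: nat and d :: "site \<Rightarrow> nat" and A :: "site set" and W :: op
  assumes AS: "A \<subseteq> sites L" and d1: "\<And>u. u \<in> sites L \<Longrightarrow> 1 \<le> d u"
    and W_acts: "acts_on L d A W"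
begin

definition local_matrix :: "cfg \<Rightarrow> cfg \<Rightarrow> complex" where
  "local_matrix \<alpha> \<beta> = W (merge A \<alpha> (\<lambda>_. 0)) (merge A \<beta> (\<lambda>_. 0))"

lemma acts_on_merge:
  assumes a: "\<alpha> \<in> cfgs_on d A" and b: "\<beta> \<in> cfgs_on d A"
    and g: "\<gamma> \<in> cfgs_on d (sites L - A)" and g': "\<gamma>' \<in> cfgs_on d (sites L - A)"
  shows "W (merge A \<alpha> \<gamma>) (merge A \<beta> \<gamma>') = (if \<gamma> = \<gamma>' then local_matrix \<alpha> \<beta> else 0)"
proof (cases "\<gamma> = \<gamma>'")
  case True
  have g0: "(\<lambda>_. 0) \<in> cfgs_on d (sites L - A)" by (rule zero_cfg_in[OF d1])
  have "W (merge A \<alpha> \<gamma>) (merge A \<beta> \<gamma>) = local_matrix \<alpha> \<beta>"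
    unfolding local_matrix_def
    by (rule acts_on_local[OF W_acts merge_in_cfgs[OF AS a g0] merge_in_cfgs[OF AS b g0]
          merge_in_cfgs[OF AS a g] merge_in_cfgs[OF AS b g]]) (auto simp: merge_def)
  then show ?thesis using True by simp
next
  case False
  then obtain u where u: "\<gamma> u \<noteq> \<gamma>' u" by (metis ext)
  have "u \<in> sites L - A"
    using u cfgs_on_out[OF g, of u] cfgs_on_out[OF g', of u] by metis
  then have "W (merge A \<alpha> \<gamma>) (merge A \<beta> \<gamma>') = 0"
    using u by (intro acts_on_zero_outside[OF W_acts merge_in_cfgs[OF AS a g] merge_in_cfgs[OF AS b g'], of u])
      (auto simp: merge_def)
  then show ?thesis using False by simp
qed

lemma acts_on_row_sum:
  assumes a: "\<alpha> \<in> cfgs_on d A" and g: "\<gamma> \<in> cfgs_on d (sites L - A)"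
  shows "(\<Sum>\<tau>\<in>cfgs L d. W (merge A \<alpha> \<gamma>) \<tau> * F \<tau>) = (\<Sum>\<beta>\<in>cfgs_on d A. local_matrix \<alpha> \<beta> * F (merge A \<beta> \<gamma>))"
proof -
  have fin': "finite (cfgs_on d (sites L - A))" by (simp add: finite_cfgs_on finite_sites)
  have "(\<Sum>\<tau>\<in>cfgs L d. W (merge A \<alpha> \<gamma>) \<tau> * F \<tau>)
      = (\<Sum>\<beta>\<in>cfgs_on d A. \<Sum>\<gamma>'\<in>cfgs_on d (sites L - A). W (merge A \<alpha> \<gamma>) (merge A \<beta> \<gamma>') * F (merge A \<beta> \<gamma>'))"
    by (rule sum_cfgs_split[OF AS])
  also have "\<dots> = (\<Sum>\<beta>\<in>cfgs_on d A. \<Sum>\<gamma>'\<in>cfgs_on d (sites L - A). if \<gamma> = \<gamma>' then local_matrix \<alpha> \<beta> * F (merge A \<beta> \<gamma>') else 0)"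
    by (intro sum.cong refl) (simp add: acts_on_merge[OF a _ g])
  also have "\<dots> = (\<Sum>\<beta>\<in>cfgs_on d A. local_matrix \<alpha> \<beta> * F (merge A \<beta> \<gamma>))"
    using fin' g by simp
  finally show ?thesis .
qed

lemma local_matrix_ptrace_zero:
  assumes WP: "op_eq L d (mmult L d W P) (\<lambda>_ _. 0)" and a: "\<alpha> \<in> cfgs_on d A" and b: "\<beta> \<in> cfgs_on d A"
  shows "(\<Sum>\<beta>'\<in>cfgs_on d A. local_matrix \<alpha> \<beta>' * ptrace L d A P \<beta>' \<beta>) = 0"
proof -
  let ?CA = "cfgs_on d A" and ?CA' = "cfgs_on d (sites L - A)" and ?m = "merge A"
  have "0 = (\<Sum>\<gamma>\<in>?CA'. mmult L d W P (?m \<alpha> \<gamma>) (?m \<beta> \<gamma>))"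
    using WP merge_in_cfgs[OF AS] a b by (auto simp: op_eq_def)
  also have "\<dots> = (\<Sum>\<gamma>\<in>?CA'. \<Sum>\<beta>'\<in>?CA. local_matrix \<alpha> \<beta>' * P (?m \<beta>' \<gamma>) (?m \<beta> \<gamma>))"
  proof (rule sum.cong[OF refl])
    fix \<gamma> assume g: "\<gamma> \<in> ?CA'"
    have "mmult L d W P (?m \<alpha> \<gamma>) (?m \<beta> \<gamma>) = (\<Sum>\<tau>\<in>cfgs L d. W (?m \<alpha> \<gamma>) \<tau> * P \<tau> (?m \<beta> \<gamma>))"
      using merge_in_cfgs[OF AS a g] merge_in_cfgs[OF AS b g] by (simp add: mmult_def)
    then show "mmult L d W P (?m \<alpha> \<gamma>) (?m \<beta> \<gamma>) = (\<Sum>\<beta>'\<in>?CA. local_matrix \<alpha> \<beta>' * P (?m \<beta>' \<gamma>) (?m \<beta> \<gamma>))"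
      by (simp only: acts_on_row_sum[OF a g])
  qed
  also have "\<dots> = (\<Sum>\<beta>'\<in>?CA. local_matrix \<alpha> \<beta>' * ptrace L d A P \<beta>' \<beta>)"
    by (simp add: ptrace_def sum_distrib_left) (rule sum.swap)
  finally show ?thesis by simp
qed

lemma cnj_local_row_in_rkernel:
  assumes hP: "op_eq L d P (adjoint P)" and WP: "op_eq L d (mmult L d W P) (\<lambda>_ _. 0)"
    and a: "\<alpha> \<in> cfgs_on d A"
  shows "(\<lambda>\<beta>. cnj (local_matrix \<alpha> \<beta>)) \<in> rkernel d A (ptrace L d A P)"
  unfolding rkernel_def
proof (intro CollectI ballI)
  let ?CA = "cfgs_on d A" and ?\<rho> = "ptrace L d A P"
  fix \<beta> assume b: "\<beta> \<in> ?CA"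
  have \<rho>_herm: "?\<rho> \<beta> \<beta>' = cnj (?\<rho> \<beta>' \<beta>)" if "\<beta>' \<in> ?CA" for \<beta>'
    unfolding ptrace_def cnj_sum
  proof (rule sum.cong[OF refl])
    fix \<gamma> assume "\<gamma> \<in> cfgs_on d (sites L - A)"
    then show "P (merge A \<beta> \<gamma>) (merge A \<beta>' \<gamma>) = cnj (P (merge A \<beta>' \<gamma>) (merge A \<beta> \<gamma>))"
      using hP merge_in_cfgs[OF AS b] merge_in_cfgs[OF AS that] unfolding op_eq_def adjoint_def by blast
  qed
  have "(\<Sum>\<beta>'\<in>?CA. ?\<rho> \<beta> \<beta>' * cnj (local_matrix \<alpha> \<beta>')) = cnj (\<Sum>\<beta>'\<in>?CA. local_matrix \<alpha> \<beta>' * ?\<rho> \<beta>' \<beta>)"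
    unfolding cnj_sum
  proof (rule sum.cong[OF refl])
    fix \<beta>' assume "\<beta>' \<in> ?CA"
    then show "?\<rho> \<beta> \<beta>' * cnj (local_matrix \<alpha> \<beta>') = cnj (local_matrix \<alpha> \<beta>' * ?\<rho> \<beta>' \<beta>)"
      by (simp only: \<rho>_herm complex_cnj_mult mult.commute)
  qed
  then show "(\<Sum>\<beta>'\<in>?CA. ?\<rho> \<beta> \<beta>' * cnj (local_matrix \<alpha> \<beta>')) = 0"
    using local_matrix_ptrace_zero[OF WP a b] by simp
qed

lemma row_form_local:
  assumes a: "\<alpha> \<in> cfgs_on d A" and g: "\<gamma> \<in> cfgs_on d (sites L - A)"
  shows "(\<Sum>\<tau>\<in>cfgs L d. \<Sum>\<tau>'\<in>cfgs L d. W (merge A \<alpha> \<gamma>) \<tau> * cnj (W (merge A \<alpha> \<gamma>) \<tau>') * Q \<tau> \<tau>')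
       = (\<Sum>\<beta>\<in>cfgs_on d A. \<Sum>\<beta>'\<in>cfgs_on d A.
            local_matrix \<alpha> \<beta> * cnj (local_matrix \<alpha> \<beta>') * Q (merge A \<beta> \<gamma>) (merge A \<beta>' \<gamma>))"
proof -
  let ?C = "cfgs L d" and ?CA = "cfgs_on d A" and ?m = "merge A"
  have cnj_row: "(\<Sum>\<tau>'\<in>?C. cnj (W (?m \<alpha> \<gamma>) \<tau>') * F \<tau>') = (\<Sum>\<beta>'\<in>?CA. cnj (local_matrix \<alpha> \<beta>') * F (?m \<beta>' \<gamma>))" for F
  proof -
    have "(\<Sum>\<tau>'\<in>?C. cnj (W (?m \<alpha> \<gamma>) \<tau>') * F \<tau>') = cnj (\<Sum>\<tau>'\<in>?C. W (?m \<alpha> \<gamma>) \<tau>' * cnj (F \<tau>'))" by simp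
    also have "\<dots> = cnj (\<Sum>\<beta>'\<in>?CA. local_matrix \<alpha> \<beta>' * cnj (F (?m \<beta>' \<gamma>)))" by (simp only: acts_on_row_sum[OF a g])
    finally show ?thesis by simp
  qed
  have "(\<Sum>\<tau>\<in>?C. \<Sum>\<tau>'\<in>?C. W (?m \<alpha> \<gamma>) \<tau> * cnj (W (?m \<alpha> \<gamma>) \<tau>') * Q \<tau> \<tau>')
      = (\<Sum>\<tau>\<in>?C. W (?m \<alpha> \<gamma>) \<tau> * (\<Sum>\<tau>'\<in>?C. cnj (W (?m \<alpha> \<gamma>) \<tau>') * Q \<tau> \<tau>'))"
    by (simp only: sum_distrib_left mult.assoc)
  also have "\<dots> = (\<Sum>\<beta>\<in>?CA. local_matrix \<alpha> \<beta> * (\<Sum>\<beta>'\<in>?CA. cnj (local_matrix \<alpha> \<beta>') * Q (?m \<beta> \<gamma>) (?m \<beta>' \<gamma>)))"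
    by (simp only: acts_on_row_sum[OF a g] cnj_row)
  also have "\<dots> = (\<Sum>\<beta>\<in>?CA. \<Sum>\<beta>'\<in>?CA. local_matrix \<alpha> \<beta> * cnj (local_matrix \<alpha> \<beta>') * Q (?m \<beta> \<gamma>) (?m \<beta>' \<gamma>))"
    by (simp only: sum_distrib_left mult.assoc)
  finally show ?thesis .
qed

text \<open>With \<open>Z = W Q\<close> and \<open>\<rho>\<^sub>Q\<close> the partial trace of \<open>Q\<close> over the complement of \<open>A\<close>,
  \<open>tr (Z Z\<^sup>*) = tr (W\<^sub>A \<rho>\<^sub>Q W\<^sub>A\<^sup>*)\<close>. The rows of \<open>W\<^sub>A\<close> lie in \<open>ker \<rho>\<^sub>P\<close> because \<open>W P = 0\<close>,
  hence in \<open>ker \<rho>\<^sub>Q\<close> by the kernel hypothesis (TQO-2), so this trace vanishes.\<close>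
lemma acts_on_block_proj_zero:
  assumes hP: "op_eq L d P (adjoint P)"
    and WP: "op_eq L d (mmult L d W P) (\<lambda>_ _. 0)"
    and ker: "rkernel d A (ptrace L d A P) \<subseteq> rkernel d A (ptrace L d A Q)"
    and hQ: "herm L d Q" and iQ: "idem L d Q"
  shows "vec_eq L d (apply_op L d W (apply_op L d Q \<psi>)) (\<lambda>_. 0)"
proof -
  let ?CA = "cfgs_on d A" and ?CA' = "cfgs_on d (sites L - A)" and ?C = "cfgs L d"
  let ?m = "merge A" and ?\<rho>Q = "ptrace L d A Q"
  define Z where "Z \<sigma> \<mu> = (\<Sum>\<tau>\<in>?C. W \<sigma> \<tau> * Q \<tau> \<mu>)" for \<sigma> \<mu>
  have \<rho>Q_row: "(\<Sum>\<beta>'\<in>?CA. ?\<rho>Q \<beta> \<beta>' * cnj (local_matrix \<alpha> \<beta>')) = 0" if "\<alpha> \<in> ?CA" "\<beta> \<in> ?CA" for \<alpha> \<beta>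
    using ker cnj_local_row_in_rkernel[OF hP WP that(1)] that(2) by (auto simp: rkernel_def)
  have "(\<Sum>\<sigma>\<in>?C. \<Sum>\<mu>\<in>?C. Z \<sigma> \<mu> * cnj (Z \<sigma> \<mu>))
      = (\<Sum>\<alpha>\<in>?CA. \<Sum>\<gamma>\<in>?CA'. \<Sum>\<tau>\<in>?C. \<Sum>\<tau>'\<in>?C. W (?m \<alpha> \<gamma>) \<tau> * cnj (W (?m \<alpha> \<gamma>) \<tau>') * Q \<tau> \<tau>')"
    unfolding Z_def sum_norm_sq_mult_proj[OF hQ iQ] by (rule sum_cfgs_split[OF AS])
  also have "\<dots> = (\<Sum>\<alpha>\<in>?CA. \<Sum>\<gamma>\<in>?CA'. \<Sum>\<beta>\<in>?CA. \<Sum>\<beta>'\<in>?CA.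
                    local_matrix \<alpha> \<beta> * cnj (local_matrix \<alpha> \<beta>') * Q (?m \<beta> \<gamma>) (?m \<beta>' \<gamma>))"
    by (intro sum.cong refl row_form_local)
  also have "\<dots> = (\<Sum>\<alpha>\<in>?CA. \<Sum>\<beta>\<in>?CA. local_matrix \<alpha> \<beta> * (\<Sum>\<beta>'\<in>?CA. ?\<rho>Q \<beta> \<beta>' * cnj (local_matrix \<alpha> \<beta>')))"
  proof (rule sum.cong[OF refl])
    fix \<alpha>
    have "(\<Sum>\<gamma>\<in>?CA'. \<Sum>\<beta>\<in>?CA. \<Sum>\<beta>'\<in>?CA. local_matrix \<alpha> \<beta> * cnj (local_matrix \<alpha> \<beta>') * Q (?m \<beta> \<gamma>) (?m \<beta>' \<gamma>))
        = (\<Sum>\<beta>\<in>?CA. \<Sum>\<beta>'\<in>?CA. local_matrix \<alpha> \<beta> * cnj (local_matrix \<alpha> \<beta>') * ?\<rho>Q \<beta> \<beta>')"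
    proof -
      have "(\<Sum>\<gamma>\<in>?CA'. \<Sum>\<beta>\<in>?CA. \<Sum>\<beta>'\<in>?CA. local_matrix \<alpha> \<beta> * cnj (local_matrix \<alpha> \<beta>') * Q (?m \<beta> \<gamma>) (?m \<beta>' \<gamma>))
          = (\<Sum>\<beta>\<in>?CA. \<Sum>\<beta>'\<in>?CA. \<Sum>\<gamma>\<in>?CA'. local_matrix \<alpha> \<beta> * cnj (local_matrix \<alpha> \<beta>') * Q (?m \<beta> \<gamma>) (?m \<beta>' \<gamma>))"
        by (rule sum_swap3)
      then show ?thesis by (simp only: ptrace_def sum_distrib_left)
    qed
    then show "(\<Sum>\<gamma>\<in>?CA'. \<Sum>\<beta>\<in>?CA. \<Sum>\<beta>'\<in>?CA. local_matrix \<alpha> \<beta> * cnj (local_matrix \<alpha> \<beta>') * Q (?m \<beta> \<gamma>) (?m \<beta>' \<gamma>))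
        = (\<Sum>\<beta>\<in>?CA. local_matrix \<alpha> \<beta> * (\<Sum>\<beta>'\<in>?CA. ?\<rho>Q \<beta> \<beta>' * cnj (local_matrix \<alpha> \<beta>')))"
      by (simp add: sum_distrib_left mult_ac)
  qed
  also have "\<dots> = 0" using \<rho>Q_row by simp
  finally have "complex_of_real (\<Sum>\<sigma>\<in>?C. \<Sum>\<mu>\<in>?C. (cmod (Z \<sigma> \<mu>))\<^sup>2) = 0"
    by (simp only: of_real_sum complex_norm_square)
  then have "(\<Sum>\<sigma>\<in>?C. \<Sum>\<mu>\<in>?C. (cmod (Z \<sigma> \<mu>))\<^sup>2) = 0"
    by (simp only: of_real_eq_0_iff)
  then have Z0: "Z \<sigma> \<mu> = 0" if "\<sigma> \<in> ?C" "\<mu> \<in> ?C" for \<sigma> \<mu>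
    using finite_cfgs that by (simp add: sum_nonneg sum_nonneg_eq_0_iff)
  show ?thesis
    unfolding vec_eq_def
  proof
    fix \<sigma> assume s: "\<sigma> \<in> ?C"
    have "apply_op L d W (apply_op L d Q \<psi>) \<sigma> = (\<Sum>\<mu>\<in>?C. Z \<sigma> \<mu> * \<psi> \<mu>)"
      by (simp add: apply_op_def Z_def sum_distrib_left sum_distrib_right mult.assoc) (rule sum.swap)
    then show "apply_op L d W (apply_op L d Q \<psi>) \<sigma> = 0" using Z0 s by simp
  qed
qed

end

section \<open>Products of commuting projectors\<close>

context
  fixes L :: nat and d :: "site \<Rightarrow> nat"
begin

lemma vnorm_add_orth:
  assumes "inner L d a b = 0"
  shows "(vnorm L d (a + b))\<^sup>2 = (vnorm L d a)\<^sup>2 + (vnorm L d b)\<^sup>2"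
proof -
  have "inner L d b a = 0" using assms inner_cnj[of L d b a] by simp
  then show ?thesis using assms
    by (simp add: vnorm_sq inner_add_left inner_add_right)
qed

lemma proj_pyth:
  assumes h: "herm L d P" and i: "idem L d P"
  shows "(vnorm L d \<chi>)\<^sup>2 = (vnorm L d (apply_op L d P \<chi>))\<^sup>2 + (vnorm L d (\<chi> - apply_op L d P \<chi>))\<^sup>2"
proof -
  have o: "inner L d (apply_op L d P \<chi>) (\<chi> - apply_op L d P \<chi>) = 0"
  proof -
    have "inner L d (apply_op L d P \<chi>) (\<chi> - apply_op L d P \<chi>) = inner L d \<chi> (apply_op L d P (\<chi> - apply_op L d P \<chi>))"
      using h by (simp add: herm_def)
    also have "apply_op L d P (\<chi> - apply_op L d P \<chi>) = apply_op L d P \<chi> - apply_op L d P (apply_op L d P \<chi>)"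
      by (rule apply_op_diff)
    also have "inner L d \<chi> \<dots> = 0"
      using i by (simp add: inner_diff_right idem_def) (rule inner_cong, auto simp: vec_eq_def)
    finally show ?thesis .
  qed
  have "\<chi> = apply_op L d P \<chi> + (\<chi> - apply_op L d P \<chi>)" by simp
  then have "(vnorm L d \<chi>)\<^sup>2 = (vnorm L d (apply_op L d P \<chi> + (\<chi> - apply_op L d P \<chi>)))\<^sup>2" by simp
  also have "\<dots> = (vnorm L d (apply_op L d P \<chi>))\<^sup>2 + (vnorm L d (\<chi> - apply_op L d P \<chi>))\<^sup>2"
    by (rule vnorm_add_orth[OF o])
  finally show ?thesis .
qed

lemma proj_norm_le:
  assumes h: "herm L d P" and i: "idem L d P"
  shows "vnorm L d (apply_op L d P \<chi>) \<le> vnorm L d \<chi>"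
proof -
  have "(vnorm L d (apply_op L d P \<chi>))\<^sup>2 \<le> (vnorm L d \<chi>)\<^sup>2"
    using proj_pyth[OF h i, of \<chi>] by simp
  then show ?thesis using vnorm_nonneg by (simp add: power2_le_iff_abs_le)
qed

lemma mmult_mmult:
  "mmult L d Y (mmult L d X M) = mmult L d (mmult L d Y X) M"
proof (intro ext)
  fix \<sigma> \<tau>
  show "mmult L d Y (mmult L d X M) \<sigma> \<tau> = mmult L d (mmult L d Y X) M \<sigma> \<tau>"
  proof (cases "\<sigma> \<in> cfgs L d \<and> \<tau> \<in> cfgs L d")
    case True
    have "mmult L d Y (mmult L d X M) \<sigma> \<tau> = (\<Sum>\<rho>\<in>cfgs L d. Y \<sigma> \<rho> * (\<Sum>\<rho>'\<in>cfgs L d. X \<rho> \<rho>' * M \<rho>' \<tau>))"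
      using True unfolding mmult_def by (auto intro!: sum.cong)
    also have "\<dots> = (\<Sum>\<rho>\<in>cfgs L d. \<Sum>\<rho>'\<in>cfgs L d. Y \<sigma> \<rho> * X \<rho> \<rho>' * M \<rho>' \<tau>)"
      by (simp only: sum_distrib_left mult.assoc)
    also have "\<dots> = (\<Sum>\<rho>'\<in>cfgs L d. \<Sum>\<rho>\<in>cfgs L d. Y \<sigma> \<rho> * X \<rho> \<rho>' * M \<rho>' \<tau>)"
      by (rule sum.swap)
    also have "\<dots> = (\<Sum>\<rho>'\<in>cfgs L d. (\<Sum>\<rho>\<in>cfgs L d. Y \<sigma> \<rho> * X \<rho> \<rho>') * M \<rho>' \<tau>)"
      by (simp only: sum_distrib_right)
    also have "\<dots> = mmult L d (mmult L d Y X) M \<sigma> \<tau>"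
      using True unfolding mmult_def by (auto intro!: sum.cong)
    finally show ?thesis .
  next
    case False then show ?thesis by (auto simp: mmult_def)
  qed
qed

lemma op_eq_mmult_eq: "op_eq L d X Y \<Longrightarrow> mmult L d X M = mmult L d Y M"
  by (auto simp: fun_eq_iff mmult_def op_eq_def intro!: sum.cong)

lemma comm_op_eq:
  assumes "comm L d X Y"
  shows "op_eq L d (mmult L d X Y) (mmult L d Y X)"
proof (rule op_eqI_vec)
  fix \<psi>
  show "vec_eq L d (apply_op L d (mmult L d X Y) \<psi>) (apply_op L d (mmult L d Y X) \<psi>)"
    using apply_op_mmult_vec[of L d X Y \<psi>] apply_op_mmult_vec[of L d Y X \<psi>] assms
    by (auto simp: comm_def vec_eq_def)
qed

definition proj_prod :: "(site set \<Rightarrow> op) \<Rightarrow> site set set \<Rightarrow> op" where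
  "proj_prod PA T = Finite_Set.fold (\<lambda>A M. mmult L d (PA A) M) (idop L d) T"

lemma proj_prod_comp_fun_commute:
  assumes c: "\<And>i j. i \<in> S \<Longrightarrow> j \<in> S \<Longrightarrow> comm L d (PA i) (PA j)"
  shows "comp_fun_commute_on S (\<lambda>A M. mmult L d (PA A) M)"
proof
  fix x y assume x: "x \<in> S" and y: "y \<in> S"
  show "(\<lambda>M. mmult L d (PA y) M) \<circ> (\<lambda>M. mmult L d (PA x) M) = (\<lambda>M. mmult L d (PA x) M) \<circ> (\<lambda>M. mmult L d (PA y) M)"
    using op_eq_mmult_eq[OF comm_op_eq[OF c[OF y x]]] by (simp add: fun_eq_iff mmult_mmult)
qed

lemma proj_prod_empty: "vec_eq L d (apply_op L d (proj_prod PA {}) \<psi>) \<psi>"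
  unfolding vec_eq_def
proof
  fix \<sigma> assume s: "\<sigma> \<in> cfgs L d"
  have "apply_op L d (proj_prod PA {}) \<psi> \<sigma> = (\<Sum>\<tau>\<in>cfgs L d. if \<sigma> = \<tau> then \<psi> \<tau> else 0)"
    unfolding proj_prod_def apply_op_def using s by (intro sum.cong) (auto simp: idop_def)
  also have "\<dots> = \<psi> \<sigma>" using s finite_cfgs[of L d] by simp
  finally show "apply_op L d (proj_prod PA {}) \<psi> \<sigma> = \<psi> \<sigma>" .
qed

lemma proj_prod_empty_apply: "apply_op L d M (apply_op L d (proj_prod PA {}) \<psi>) = apply_op L d M \<psi>"
  by (rule apply_op_cong[OF proj_prod_empty])

context
  fixes PA :: "site set \<Rightarrow> op" and S :: "site set set"
  assumes PA_comm: "\<And>i j. i \<in> S \<Longrightarrow> j \<in> S \<Longrightarrow> comm L d (PA i) (PA j)"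
begin

lemma proj_prod_insert:
  assumes "insert x T \<subseteq> S" "finite T" "x \<notin> T"
  shows "vec_eq L d (apply_op L d (proj_prod PA (insert x T)) \<psi>) (apply_op L d (PA x) (apply_op L d (proj_prod PA T) \<psi>))"
proof -
  interpret comp_fun_commute_on S "\<lambda>A M. mmult L d (PA A) M"
    by (rule proj_prod_comp_fun_commute[OF PA_comm])
  have "proj_prod PA (insert x T) = mmult L d (PA x) (proj_prod PA T)"
    unfolding proj_prod_def using assms by (rule fold_insert)
  then show ?thesis by (simp add: apply_op_mmult_vec)
qed

lemma comm_proj_prod:
  assumes "finite T" "T \<subseteq> S" "\<And>i. i \<in> T \<Longrightarrow> comm L d X (PA i)"
  shows "comm L d X (proj_prod PA T)"
  using assms
proof (induction T rule: finite_induct)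
  case empty
  then show ?case using proj_prod_empty proj_prod_empty_apply by (auto simp: comm_def vec_eq_def)
next
  case (insert x T)
  let ?F = "apply_op L d (proj_prod PA T)" and ?Fi = "apply_op L d (proj_prod PA (insert x T))"
    and ?P = "apply_op L d (PA x)"
  have ins: "vec_eq L d (?Fi \<psi>) (?P (?F \<psi>))" for \<psi>
    by (rule proj_prod_insert) (use insert in auto)
  have cX: "comm L d X (proj_prod PA T)" and cXP: "comm L d X (PA x)" using insert by auto
  show ?case
    unfolding comm_def
  proof
    fix \<psi>
    have "apply_op L d X (?Fi \<psi>) = apply_op L d X (?P (?F \<psi>))"
      by (rule apply_op_cong[OF ins])
    moreover have "vec_eq L d (apply_op L d X (?P (?F \<psi>))) (?P (apply_op L d X (?F \<psi>)))"
      using cXP by (simp add: comm_def)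
    moreover have "?P (apply_op L d X (?F \<psi>)) = ?P (?F (apply_op L d X \<psi>))"
      using cX by (intro apply_op_cong) (simp add: comm_def)
    moreover have "vec_eq L d (?P (?F (apply_op L d X \<psi>))) (?Fi (apply_op L d X \<psi>))"
      using ins vec_eq_sym by blast
    ultimately show "vec_eq L d (apply_op L d X (?Fi \<psi>)) (?Fi (apply_op L d X \<psi>))"
      by (auto simp: vec_eq_def)
  qed
qed

lemma herm_idem_proj_prod:
  assumes "finite T" "T \<subseteq> S"
    and h: "\<And>i. i \<in> S \<Longrightarrow> herm L d (PA i)" and id: "\<And>i. i \<in> S \<Longrightarrow> idem L d (PA i)"
  shows "herm L d (proj_prod PA T) \<and> idem L d (proj_prod PA T)"
  using assms(1,2)
proof (induction T rule: finite_induct)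
  case empty
  have "herm L d (proj_prod PA {})"
    unfolding herm_def
    by (simp only: inner_cong[OF vec_eq_refl proj_prod_empty] inner_cong[OF proj_prod_empty vec_eq_refl]) simp
  moreover have "idem L d (proj_prod PA {})"
    unfolding idem_def using proj_prod_empty proj_prod_empty_apply by (auto simp: vec_eq_def)
  ultimately show ?case ..
next
  case (insert x T)
  let ?F = "apply_op L d (proj_prod PA T)" and ?Fi = "apply_op L d (proj_prod PA (insert x T))"
    and ?P = "apply_op L d (PA x)"
  have ins: "vec_eq L d (?Fi \<psi>) (?P (?F \<psi>))" for \<psi>
    by (rule proj_prod_insert) (use insert in auto)
  have hF: "herm L d (proj_prod PA T)" and iF: "idem L d (proj_prod PA T)" using insert by auto
  have hx: "herm L d (PA x)" and ix: "idem L d (PA x)" using h id insert by auto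
  have cPF: "comm L d (PA x) (proj_prod PA T)"
    by (rule comm_proj_prod) (use insert PA_comm in auto)
  have "herm L d (proj_prod PA (insert x T))"
    unfolding herm_def
  proof (intro allI)
    fix \<phi> \<psi>
    have "inner L d \<phi> (?Fi \<psi>) = inner L d \<phi> (?P (?F \<psi>))" by (rule inner_cong[OF vec_eq_refl ins])
    also have "\<dots> = inner L d (?F (?P \<phi>)) \<psi>" using hx hF by (simp add: herm_def)
    also have "\<dots> = inner L d (?P (?F \<phi>)) \<psi>"
      using cPF by (intro inner_cong) (auto simp: comm_def vec_eq_def)
    also have "\<dots> = inner L d (?Fi \<phi>) \<psi>" by (rule inner_cong[OF vec_eq_sym[OF ins] vec_eq_refl])
    finally show "inner L d \<phi> (?Fi \<psi>) = inner L d (?Fi \<phi>) \<psi>" .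
  qed
  moreover have "idem L d (proj_prod PA (insert x T))"
    unfolding idem_def
  proof
    fix \<psi>
    have "?Fi (?Fi \<psi>) = ?Fi (?P (?F \<psi>))" by (rule apply_op_cong[OF ins])
    moreover have "vec_eq L d (?Fi (?P (?F \<psi>))) (?P (?F (?P (?F \<psi>))))" by (rule ins)
    moreover have "vec_eq L d (?F (?P (?F \<psi>))) (?P (?F (?F \<psi>)))"
      using cPF by (simp add: comm_def vec_eq_def)
    then have "?P (?F (?P (?F \<psi>))) = ?P (?P (?F (?F \<psi>)))" by (rule apply_op_cong)
    moreover have "vec_eq L d (?P (?P (?F (?F \<psi>)))) (?P (?F (?F \<psi>)))" using ix by (simp add: idem_def)
    moreover have "?P (?F (?F \<psi>)) = ?P (?F \<psi>)" using iF by (intro apply_op_cong) (simp add: idem_def)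
    moreover have "vec_eq L d (?P (?F \<psi>)) (?Fi \<psi>)" using ins vec_eq_sym by blast
    ultimately show "vec_eq L d (?Fi (?Fi \<psi>)) (?Fi \<psi>)" by (simp add: vec_eq_def)
  qed
  ultimately show ?case ..
qed

text \<open>\<open>1 - P\<^sub>x F = (1 - P\<^sub>x) + P\<^sub>x (1 - F)\<close> is an orthogonal decomposition.\<close>
lemma compl_proj_prod_norm_sq_le:
  assumes "finite T" "T \<subseteq> S"
    and h: "\<And>i. i \<in> S \<Longrightarrow> herm L d (PA i)" and id: "\<And>i. i \<in> S \<Longrightarrow> idem L d (PA i)"
  shows "(vnorm L d (\<psi> - apply_op L d (proj_prod PA T) \<psi>))\<^sup>2
           \<le> (\<Sum>i\<in>T. (vnorm L d (\<psi> - apply_op L d (PA i) \<psi>))\<^sup>2)"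
  using assms(1,2)
proof (induction T rule: finite_induct)
  case empty
  have "vec_eq L d (\<psi> - apply_op L d (proj_prod PA {}) \<psi>) (\<lambda>_. 0)"
    using proj_prod_empty by (simp add: vec_eq_def)
  then have "vnorm L d (\<psi> - apply_op L d (proj_prod PA {}) \<psi>) = 0" by (simp only: vnorm_zero_iff)
  then show ?case by (simp only: sum.empty power_zero_numeral order_refl)
next
  case (insert x T)
  let ?F = "apply_op L d (proj_prod PA T)" and ?Fi = "apply_op L d (proj_prod PA (insert x T))"
    and ?P = "apply_op L d (PA x)"
  have hx: "herm L d (PA x)" and ix: "idem L d (PA x)" using h id insert by auto
  let ?a = "\<psi> - ?P \<psi>" and ?b = "?P (\<psi> - ?F \<psi>)"
  have "vec_eq L d (\<psi> - ?Fi \<psi>) (?a + ?b)"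
    using proj_prod_insert[of x T \<psi>] insert by (simp add: vec_eq_def apply_op_diff)
  then have e: "vnorm L d (\<psi> - ?Fi \<psi>) = vnorm L d (?a + ?b)" by (rule vnorm_cong)
  have o: "inner L d ?a ?b = 0"
  proof -
    have "inner L d ?a ?b = inner L d (?P ?a) (\<psi> - ?F \<psi>)" using hx by (simp add: herm_def)
    also have "\<dots> = inner L d (\<lambda>_. 0) (\<psi> - ?F \<psi>)"
      using ix by (intro inner_cong) (auto simp: apply_op_diff idem_def vec_eq_def)
    finally show ?thesis by (simp add: inner_def)
  qed
  have "(vnorm L d (\<psi> - ?Fi \<psi>))\<^sup>2 = (vnorm L d ?a)\<^sup>2 + (vnorm L d ?b)\<^sup>2"
    using e vnorm_add_orth[OF o] by simp
  moreover have "(vnorm L d ?b)\<^sup>2 \<le> (vnorm L d (\<psi> - ?F \<psi>))\<^sup>2"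
    using proj_norm_le[OF hx ix] vnorm_nonneg by (simp add: power_mono)
  moreover have "(vnorm L d (\<psi> - ?F \<psi>))\<^sup>2 \<le> (\<Sum>i\<in>T. (vnorm L d (\<psi> - apply_op L d (PA i) \<psi>))\<^sup>2)"
    using insert.IH insert.prems by blast
  moreover have "(\<Sum>i\<in>insert x T. (vnorm L d (\<psi> - apply_op L d (PA i) \<psi>))\<^sup>2)
      = (vnorm L d ?a)\<^sup>2 + (\<Sum>i\<in>T. (vnorm L d (\<psi> - apply_op L d (PA i) \<psi>))\<^sup>2)"
    by (rule sum.insert[OF insert.hyps])
  ultimately show ?case by linarith
qed

end

end

context
  fixes L :: nat and d :: "site \<Rightarrow> nat"
begin

abbreviation compl_proj :: "op \<Rightarrow> vec \<Rightarrow> vec" where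
  "compl_proj P x \<equiv> x - apply_op L d P x"

lemma compl_proj_herm: "herm L d P \<Longrightarrow> inner L d (compl_proj P x) y = inner L d x (compl_proj P y)"
  by (simp add: inner_diff_left inner_diff_right herm_def)

lemma compl_proj_idem: "idem L d P \<Longrightarrow> vec_eq L d (compl_proj P (compl_proj P x)) (compl_proj P x)"
  by (simp add: apply_op_diff idem_def vec_eq_def)

lemma compl_proj_comm: "comm L d X P \<Longrightarrow> vec_eq L d (apply_op L d X (compl_proj P x)) (compl_proj P (apply_op L d X x))"
  by (simp add: apply_op_diff comm_def vec_eq_def)

lemma compl_proj_compl_proj_comm: "comm L d P Q \<Longrightarrow> vec_eq L d (compl_proj P (compl_proj Q x)) (compl_proj Q (compl_proj P x))"
  by (simp add: apply_op_diff comm_def vec_eq_def)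

lemma compl_proj_norm_sq:
  assumes hP: "herm L d P" and iP: "idem L d P"
  shows "(vnorm L d (compl_proj P u))\<^sup>2 = Re (inner L d u (compl_proj P u))"
proof -
  have "inner L d (compl_proj P u) (compl_proj P u) = inner L d u (compl_proj P (compl_proj P u))" by (rule compl_proj_herm[OF hP])
  also have "\<dots> = inner L d u (compl_proj P u)" by (rule inner_cong[OF vec_eq_refl compl_proj_idem[OF iP]])
  finally show ?thesis by (simp add: vnorm_sq)
qed

lemma norm_sq_le_of_re_inner_nonneg:
  assumes "0 \<le> Re (inner L d a (h - a))"
  shows "(vnorm L d a)\<^sup>2 \<le> (vnorm L d h)\<^sup>2"
proof -
  have "(vnorm L d h)\<^sup>2 = Re (inner L d (a + (h - a)) (a + (h - a)))" by (simp add: vnorm_sq)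
  also have "\<dots> = (vnorm L d a)\<^sup>2 + (vnorm L d (h - a))\<^sup>2 + 2 * Re (inner L d a (h - a))"
    using inner_cnj[of L d "h - a" a] by (simp only: inner_add_left inner_add_right vnorm_sq) simp
  finally show ?thesis using assms by (simp add: zero_le_power2)
qed

lemma norm_sq_compl_compl:
  assumes hQ: "herm L d Q" and iQ: "idem L d Q" and hR: "herm L d R" and iR: "idem L d R"
    and cQR: "comm L d Q R"
  shows "(vnorm L d (compl_proj R (compl_proj Q \<psi>)))\<^sup>2 = Re (inner L d (compl_proj Q \<psi>) (compl_proj R \<psi>))"
proof -
  have "inner L d (compl_proj Q \<psi>) (compl_proj R \<psi>) = inner L d (compl_proj Q (compl_proj Q \<psi>)) (compl_proj R \<psi>)"
    by (rule inner_cong[OF vec_eq_sym[OF compl_proj_idem[OF iQ]] vec_eq_refl])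
  also have "\<dots> = inner L d (compl_proj Q \<psi>) (compl_proj Q (compl_proj R \<psi>))"
    by (rule compl_proj_herm[OF hQ])
  also have "\<dots> = inner L d (compl_proj Q \<psi>) (compl_proj R (compl_proj Q \<psi>))"
    by (rule inner_cong[OF vec_eq_refl compl_proj_compl_proj_comm[OF cQR]])
  finally show ?thesis
    using compl_proj_norm_sq[OF hR iR, of "compl_proj Q \<psi>"] by simp
qed

text \<open>Cross terms are nonnegative: \<open>\<langle>(1 - P\<^sub>i)\<psi>, G\<^sub>j\<psi>\<rangle> = \<langle>u, G\<^sub>j u\<rangle>\<close> with
  \<open>u = (1 - P\<^sub>i)\<psi>\<close>, which dominates \<open>\<parallel>(1 - P\<^sub>j) u\<parallel>\<^sup>2 = \<langle>(1 - P\<^sub>i)\<psi>, (1 - P\<^sub>j)\<psi>\<rangle>\<close>.\<close>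
lemma sum_double_compl_proj_le:
  assumes fin: "finite I"
    and pG: "\<And>i. i \<in> I \<Longrightarrow> psd L d (G i)"
    and sG: "\<And>i. i \<in> I \<Longrightarrow> op_le L d (G i) (mmult L d (G i) (G i))"
    and hP: "\<And>i. i \<in> I \<Longrightarrow> herm L d (P i)" and iP: "\<And>i. i \<in> I \<Longrightarrow> idem L d (P i)"
    and kP: "\<And>i \<psi>. i \<in> I \<Longrightarrow> vec_eq L d (apply_op L d (G i) \<psi>) (\<lambda>_. 0) \<longleftrightarrow> vec_eq L d (apply_op L d (P i) \<psi>) \<psi>"
    and cPP: "\<And>i j. i \<in> I \<Longrightarrow> j \<in> I \<Longrightarrow> comm L d (P i) (P j)"
    and cGP: "\<And>i j. i \<in> I \<Longrightarrow> j \<in> I \<Longrightarrow> comm L d (G j) (P i)"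
  shows "(\<Sum>i\<in>I. \<Sum>j\<in>I. (vnorm L d (compl_proj (P j) (compl_proj (P i) \<psi>)))\<^sup>2)
         \<le> (vnorm L d (\<lambda>\<sigma>. \<Sum>i\<in>I. apply_op L d (G i) \<psi> \<sigma>))\<^sup>2"
proof -
  let ?R = "\<lambda>i x. compl_proj (P i) x" and ?G = "\<lambda>j x. apply_op L d (G j) x"
  define a where "a = (\<lambda>\<sigma>. \<Sum>i\<in>I. ?R i \<psi> \<sigma>)"
  have cross: "0 \<le> Re (inner L d (?R i \<psi>) (?G j \<psi> - ?R j \<psi>))" if i: "i \<in> I" and j: "j \<in> I" for i j
  proof -
    let ?u = "?R i \<psi>"
    have "inner L d ?u (?G j \<psi>) = inner L d (?R i ?u) (?G j \<psi>)"
      by (rule inner_cong[OF vec_eq_sym[OF compl_proj_idem[OF iP[OF i]]] vec_eq_refl])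
    also have "\<dots> = inner L d ?u (?R i (?G j \<psi>))" by (rule compl_proj_herm[OF hP[OF i]])
    also have "\<dots> = inner L d ?u (?G j ?u)"
      by (rule inner_cong[OF vec_eq_refl vec_eq_sym[OF compl_proj_comm[OF cGP[OF i j]]]])
    finally have "inner L d ?u (?G j \<psi>) = inner L d ?u (?G j ?u)" .
    moreover have "(vnorm L d (?R j ?u))\<^sup>2 \<le> Re (inner L d ?u (?G j ?u))"
      by (rule compl_proj_norm_le_form[OF pG[OF j] sG[OF j] hP[OF j] iP[OF j] kP[OF j]])
    ultimately show ?thesis
      using norm_sq_compl_compl[OF hP[OF i] iP[OF i] hP[OF j] iP[OF j] cPP[OF i j]]
      by (simp add: inner_diff_right)
  qed
  have "(\<lambda>\<sigma>. \<Sum>i\<in>I. ?G i \<psi> \<sigma>) - a = (\<lambda>\<sigma>. \<Sum>j\<in>I. (?G j \<psi> - ?R j \<psi>) \<sigma>)"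
    by (simp add: a_def fun_eq_iff sum_subtractf)
  then have "inner L d a ((\<lambda>\<sigma>. \<Sum>i\<in>I. ?G i \<psi> \<sigma>) - a)
      = (\<Sum>i\<in>I. \<Sum>j\<in>I. inner L d (?R i \<psi>) (?G j \<psi> - ?R j \<psi>))"
    unfolding a_def by (simp only: inner_sum_left inner_sum_right)
  then have "0 \<le> Re (inner L d a ((\<lambda>\<sigma>. \<Sum>i\<in>I. ?G i \<psi> \<sigma>) - a))"
    by (simp only: Re_sum) (intro sum_nonneg cross)
  then have a_le: "(vnorm L d a)\<^sup>2 \<le> (vnorm L d (\<lambda>\<sigma>. \<Sum>i\<in>I. ?G i \<psi> \<sigma>))\<^sup>2"
    by (rule norm_sq_le_of_re_inner_nonneg)
  have "(\<Sum>i\<in>I. \<Sum>j\<in>I. (vnorm L d (?R j (?R i \<psi>)))\<^sup>2)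
      = (\<Sum>i\<in>I. \<Sum>j\<in>I. Re (inner L d (?R i \<psi>) (?R j \<psi>)))"
    by (intro sum.cong refl norm_sq_compl_compl hP iP cPP) auto
  moreover have "inner L d a a = (\<Sum>i\<in>I. \<Sum>j\<in>I. inner L d (?R i \<psi>) (?R j \<psi>))"
    unfolding a_def by (simp only: inner_sum_left inner_sum_right)
  ultimately have "(\<Sum>i\<in>I. \<Sum>j\<in>I. (vnorm L d (?R j (?R i \<psi>)))\<^sup>2) = (vnorm L d a)\<^sup>2"
    by (simp only: vnorm_sq Re_sum)
  with a_le show ?thesis by simp
qed

end

lemma sum_sym_swap:
  assumes sym: "\<And>a b. ov a b \<longleftrightarrow> ov b a"
  shows "(\<Sum>a\<in>S. \<Sum>b\<in>S. if ov a b then f b else (0::real)) = (\<Sum>a\<in>S. \<Sum>b\<in>S. if ov a b then f a else 0)"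
proof -
  have "(\<Sum>a\<in>S. \<Sum>b\<in>S. if ov a b then f b else (0::real)) = (\<Sum>b\<in>S. \<Sum>a\<in>S. if ov a b then f b else 0)"
    by (rule sum.swap)
  also have "\<dots> = (\<Sum>b\<in>S. \<Sum>a\<in>S. if ov b a then f b else 0)" using sym by simp
  finally show ?thesis .
qed

lemma sum_overlapping_le:
  fixes f :: "'a \<Rightarrow> real"
  assumes "finite S" "\<And>a. a \<in> S \<Longrightarrow> real (card {b \<in> S. ov a b}) \<le> K" "\<And>a. a \<in> S \<Longrightarrow> 0 \<le> f a"
  shows "(\<Sum>a\<in>S. \<Sum>b\<in>S. if ov a b then f a else 0) \<le> K * (\<Sum>a\<in>S. f a)"
proof -
  have "(\<Sum>b\<in>S. if ov a b then f a else 0) = real (card {b \<in> S. ov a b}) * f a" for a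
    using assms(1) by (simp add: sum.If_cases Int_def)
  then have "(\<Sum>a\<in>S. \<Sum>b\<in>S. if ov a b then f a else 0) = (\<Sum>a\<in>S. real (card {b \<in> S. ov a b}) * f a)"
    by simp
  also have "\<dots> \<le> (\<Sum>a\<in>S. K * f a)"
    using assms(2,3) by (intro sum_mono mult_right_mono) auto
  finally show ?thesis by (simp add: sum_distrib_left)
qed

lemma re_inner_le_mean_sq:
  assumes "vnorm L d x \<le> w * a" "vnorm L d y \<le> w * b" "0 \<le> w" "0 \<le> a" "0 \<le> b"
  shows "Re (inner L d x y) \<le> w\<^sup>2 * (a\<^sup>2 + b\<^sup>2) / 2"
proof -
  have "Re (inner L d x y) \<le> vnorm L d x * vnorm L d y"
    using complex_Re_le_cmod inner_CS order_trans by blast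
  also have "\<dots> \<le> (w * a) * (w * b)"
    using assms by (intro mult_mono) (auto simp: vnorm_nonneg)
  also have "\<dots> = w\<^sup>2 * (2 * a * b) / 2" by (simp add: power2_eq_square)
  also have "\<dots> \<le> w\<^sup>2 * (a\<^sup>2 + b\<^sup>2) / 2"
    by (intro divide_right_mono mult_left_mono sum_squares_bound) auto
  finally show ?thesis .
qed

context
  fixes L :: nat and d :: "site \<Rightarrow> nat" and Sq :: "'a set" and S2 :: "site set set"
    and Q :: "'a \<Rightarrow> op" and P :: "site set \<Rightarrow> op" and K :: real
  assumes finite_S2: "finite S2" and K_nonneg: "0 \<le> K"
    and P_idem: "\<And>i. i \<in> S2 \<Longrightarrow> idem L d (P i)"
    and comm_P_Q: "\<And>i A. i \<in> S2 \<Longrightarrow> A \<in> Sq \<Longrightarrow> comm L d (P i) (Q A)"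
    and sum_compl_Q_le: "\<And>\<phi>. (\<Sum>A\<in>Sq. (vnorm L d (compl_proj L d (Q A) \<phi>))\<^sup>2)
                               \<le> K * (\<Sum>i\<in>S2. (vnorm L d (compl_proj L d (P i) \<phi>))\<^sup>2)"
begin

lemma sum_compl_le_double_compl:
  "(\<Sum>A\<in>Sq. (vnorm L d (compl_proj L d (Q A) \<psi>))\<^sup>2)
     \<le> K * (\<Sum>i\<in>S2. \<Sum>j\<in>S2. (vnorm L d (compl_proj L d (P j) (compl_proj L d (P i) \<psi>)))\<^sup>2)"
proof -
  have "(vnorm L d (compl_proj L d (P i) \<psi>))\<^sup>2
      \<le> (\<Sum>j\<in>S2. (vnorm L d (compl_proj L d (P j) (compl_proj L d (P i) \<psi>)))\<^sup>2)" if i: "i \<in> S2" for i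
  proof -
    have "(vnorm L d (compl_proj L d (P i) \<psi>))\<^sup>2 = (vnorm L d (compl_proj L d (P i) (compl_proj L d (P i) \<psi>)))\<^sup>2"
      using vnorm_cong[OF compl_proj_idem[OF P_idem[OF i]]] by simp
    also have "\<dots> \<le> (\<Sum>j\<in>S2. (vnorm L d (compl_proj L d (P j) (compl_proj L d (P i) \<psi>)))\<^sup>2)"
      using finite_S2 i by (intro member_le_sum) auto
    finally show ?thesis .
  qed
  then have "(\<Sum>i\<in>S2. (vnorm L d (compl_proj L d (P i) \<psi>))\<^sup>2)
      \<le> (\<Sum>i\<in>S2. \<Sum>j\<in>S2. (vnorm L d (compl_proj L d (P j) (compl_proj L d (P i) \<psi>)))\<^sup>2)"
    by (intro sum_mono) auto
  then show ?thesis
    using sum_compl_Q_le[of \<psi>] K_nonneg by (meson mult_left_mono order_trans)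
qed

lemma sum_compl_compl_le_double_compl:
  "(\<Sum>A\<in>Sq. \<Sum>A'\<in>Sq. (vnorm L d (compl_proj L d (Q A) (compl_proj L d (Q A') \<psi>)))\<^sup>2)
     \<le> K\<^sup>2 * (\<Sum>i\<in>S2. \<Sum>j\<in>S2. (vnorm L d (compl_proj L d (P j) (compl_proj L d (P i) \<psi>)))\<^sup>2)"
proof -
  let ?Q = "\<lambda>A x. compl_proj L d (Q A) x" and ?R = "\<lambda>i x. compl_proj L d (P i) x"
  have "(\<Sum>A\<in>Sq. \<Sum>A'\<in>Sq. (vnorm L d (?Q A (?Q A' \<psi>)))\<^sup>2) = (\<Sum>A'\<in>Sq. \<Sum>A\<in>Sq. (vnorm L d (?Q A (?Q A' \<psi>)))\<^sup>2)"
    by (rule sum.swap)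
  also have "\<dots> \<le> (\<Sum>A'\<in>Sq. K * (\<Sum>i\<in>S2. (vnorm L d (?R i (?Q A' \<psi>)))\<^sup>2))"
    by (intro sum_mono sum_compl_Q_le)
  also have "\<dots> = K * (\<Sum>i\<in>S2. \<Sum>A'\<in>Sq. (vnorm L d (?Q A' (?R i \<psi>)))\<^sup>2)"
  proof -
    have "vnorm L d (?R i (?Q A' \<psi>)) = vnorm L d (?Q A' (?R i \<psi>))" if "i \<in> S2" "A' \<in> Sq" for i A'
      by (rule vnorm_cong[OF compl_proj_compl_proj_comm[OF comm_P_Q[OF that]]])
    then show ?thesis by (simp add: sum_distrib_left) (subst sum.swap, simp)
  qed
  also have "\<dots> \<le> K * (\<Sum>i\<in>S2. K * (\<Sum>j\<in>S2. (vnorm L d (?R j (?R i \<psi>)))\<^sup>2))"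
    by (intro mult_left_mono sum_mono sum_compl_Q_le K_nonneg)
  also have "\<dots> = K\<^sup>2 * (\<Sum>i\<in>S2. \<Sum>j\<in>S2. (vnorm L d (?R j (?R i \<psi>)))\<^sup>2)"
    by (simp add: sum_distrib_left power2_eq_square mult.assoc)
  finally show ?thesis .
qed

end

context
  fixes L :: nat and d :: "site \<Rightarrow> nat" and Sq :: "'a set"
    and W Q :: "'a \<Rightarrow> op" and ov :: "'a \<Rightarrow> 'a \<Rightarrow> bool" and w :: real
  assumes w_nonneg: "0 \<le> w"
    and W_bound: "\<And>A x. A \<in> Sq \<Longrightarrow> vnorm L d (apply_op L d (W A) x) \<le> w * vnorm L d x"
    and W_Q_zero: "\<And>A x. A \<in> Sq \<Longrightarrow> vec_eq L d (apply_op L d (W A) (apply_op L d (Q A) x)) (\<lambda>_. 0)"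
    and Q_W_zero: "\<And>A x. A \<in> Sq \<Longrightarrow> vec_eq L d (apply_op L d (Q A) (apply_op L d (W A) x)) (\<lambda>_. 0)"
    and Q_herm: "\<And>A. A \<in> Sq \<Longrightarrow> herm L d (Q A)"
    and comm_W_Q: "\<And>A A'. A \<in> Sq \<Longrightarrow> A' \<in> Sq \<Longrightarrow> \<not> ov A A' \<Longrightarrow> comm L d (W A) (Q A')"
    and ov_sym: "\<And>A A'. ov A A' \<longleftrightarrow> ov A' A"
begin

lemma W_compl_eq: "A \<in> Sq \<Longrightarrow> vec_eq L d (apply_op L d (W A) x) (apply_op L d (W A) (compl_proj L d (Q A) x))"
  using W_Q_zero[of A x] by (simp add: apply_op_diff vec_eq_def)

lemma compl_W_eq: "A \<in> Sq \<Longrightarrow> vec_eq L d (compl_proj L d (Q A) (apply_op L d (W A) x)) (apply_op L d (W A) x)"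
  using Q_W_zero[of A x] by (simp add: vec_eq_def)

lemma vnorm_W_le_compl: "A \<in> Sq \<Longrightarrow> vnorm L d (apply_op L d (W A) x) \<le> w * vnorm L d (compl_proj L d (Q A) x)"
  using W_bound[of A "compl_proj L d (Q A) x"] vnorm_cong[OF W_compl_eq[of A x]] by simp

lemma inner_W_nonoverlapping:
  assumes A: "A \<in> Sq" and A': "A' \<in> Sq" and nov: "\<not> ov A A'"
  shows "inner L d (apply_op L d (W A) \<psi>) (apply_op L d (W A') \<psi>)
       = inner L d (apply_op L d (W A) (compl_proj L d (Q A) (compl_proj L d (Q A') \<psi>)))
                   (apply_op L d (W A') (compl_proj L d (Q A') (compl_proj L d (Q A) \<psi>)))"
proof -
  let ?W = "\<lambda>A x. apply_op L d (W A) x" and ?Q = "\<lambda>A x. compl_proj L d (Q A) x"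
  have cWQ: "vec_eq L d (?W A (?Q A' x)) (?Q A' (?W A x))" if "A \<in> Sq" "A' \<in> Sq" "\<not> ov A A'" for A A' x
    by (rule compl_proj_comm[OF comm_W_Q[OF that]])
  have nov': "\<not> ov A' A" using nov ov_sym by blast
  have "inner L d (?W A \<psi>) (?W A' \<psi>) = inner L d (?W A \<psi>) (?Q A' (?W A' \<psi>))"
    by (rule inner_cong[OF vec_eq_refl vec_eq_sym[OF compl_W_eq[OF A']]])
  also have "\<dots> = inner L d (?Q A' (?W A \<psi>)) (?W A' \<psi>)" by (rule compl_proj_herm[OF Q_herm[OF A'], symmetric])
  also have "\<dots> = inner L d (?W A (?Q A' \<psi>)) (?W A' \<psi>)"
    by (rule inner_cong[OF vec_eq_sym[OF cWQ[OF A A' nov]] vec_eq_refl])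
  also have "\<dots> = inner L d (?Q A (?W A (?Q A' \<psi>))) (?W A' \<psi>)"
    by (rule inner_cong[OF vec_eq_sym[OF compl_W_eq[OF A]] vec_eq_refl])
  also have "\<dots> = inner L d (?W A (?Q A' \<psi>)) (?Q A (?W A' \<psi>))" by (rule compl_proj_herm[OF Q_herm[OF A]])
  also have "\<dots> = inner L d (?W A (?Q A' \<psi>)) (?W A' (?Q A \<psi>))"
    by (rule inner_cong[OF vec_eq_refl vec_eq_sym[OF cWQ[OF A' A nov']]])
  also have "\<dots> = inner L d (?W A (?Q A (?Q A' \<psi>))) (?W A' (?Q A' (?Q A \<psi>)))"
    by (rule inner_cong[OF W_compl_eq[OF A] W_compl_eq[OF A']])
  finally show ?thesis .
qed

lemma re_inner_W_le:
  assumes "A \<in> Sq" "A' \<in> Sq"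
  shows "Re (inner L d (apply_op L d (W A) \<psi>) (apply_op L d (W A') \<psi>))
       \<le> (if ov A A' then w\<^sup>2 * ((vnorm L d (compl_proj L d (Q A) \<psi>))\<^sup>2 + (vnorm L d (compl_proj L d (Q A') \<psi>))\<^sup>2) / 2 else 0)
         + w\<^sup>2 * ((vnorm L d (compl_proj L d (Q A) (compl_proj L d (Q A') \<psi>)))\<^sup>2
                 + (vnorm L d (compl_proj L d (Q A') (compl_proj L d (Q A) \<psi>)))\<^sup>2) / 2"
proof (cases "ov A A'")
  case True
  then show ?thesis
    using re_inner_le_mean_sq[OF vnorm_W_le_compl vnorm_W_le_compl w_nonneg vnorm_nonneg vnorm_nonneg] assms
    by (simp add: add_increasing2)
next
  case False
  have "Re (inner L d (apply_op L d (W A) (compl_proj L d (Q A) (compl_proj L d (Q A') \<psi>)))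
                      (apply_op L d (W A') (compl_proj L d (Q A') (compl_proj L d (Q A) \<psi>))))
      \<le> w\<^sup>2 * ((vnorm L d (compl_proj L d (Q A) (compl_proj L d (Q A') \<psi>)))\<^sup>2
                 + (vnorm L d (compl_proj L d (Q A') (compl_proj L d (Q A) \<psi>)))\<^sup>2) / 2"
    by (rule re_inner_le_mean_sq[OF W_bound[OF assms(1)] W_bound[OF assms(2)] w_nonneg vnorm_nonneg vnorm_nonneg])
  then show ?thesis
    using False by (simp add: inner_W_nonoverlapping[OF assms False, where \<psi>=\<psi>])
qed

lemma local_sum_norm_sq_bound:
  fixes S2 :: "site set set" and P :: "site set \<Rightarrow> op"
  assumes finite_Sq: "finite Sq" and finite_S2: "finite S2"
    and K1: "\<And>A. A \<in> Sq \<Longrightarrow> real (card {A' \<in> Sq. ov A A'}) \<le> K1" and K1_nonneg: "0 \<le> K1"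
    and sum_compl_Q_le: "\<And>\<phi>. (\<Sum>A\<in>Sq. (vnorm L d (compl_proj L d (Q A) \<phi>))\<^sup>2)
                               \<le> K2 * (\<Sum>i\<in>S2. (vnorm L d (compl_proj L d (P i) \<phi>))\<^sup>2)"
    and K2_nonneg: "0 \<le> K2"
    and P_idem: "\<And>i. i \<in> S2 \<Longrightarrow> idem L d (P i)"
    and comm_P_Q: "\<And>i A. i \<in> S2 \<Longrightarrow> A \<in> Sq \<Longrightarrow> comm L d (P i) (Q A)"
  shows "(vnorm L d (\<lambda>\<sigma>. \<Sum>A\<in>Sq. apply_op L d (W A) \<psi> \<sigma>))\<^sup>2
     \<le> w\<^sup>2 * (K1 * K2 + K2\<^sup>2) * (\<Sum>i\<in>S2. \<Sum>j\<in>S2. (vnorm L d (compl_proj L d (P j) (compl_proj L d (P i) \<psi>)))\<^sup>2)"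
proof -
  define X where "X = (\<Sum>i\<in>S2. \<Sum>j\<in>S2. (vnorm L d (compl_proj L d (P j) (compl_proj L d (P i) \<psi>)))\<^sup>2)"
  define qa where "qa A = (vnorm L d (compl_proj L d (Q A) \<psi>))\<^sup>2" for A
  define qq where "qq A A' = (vnorm L d (compl_proj L d (Q A) (compl_proj L d (Q A') \<psi>)))\<^sup>2" for A A'
  have pointwise: "(if ov A A' then w\<^sup>2 * (qa A + qa A') / 2 else 0) + w\<^sup>2 * (qq A A' + qq A' A) / 2
      = w\<^sup>2 / 2 * (if ov A A' then qa A else 0) + w\<^sup>2 / 2 * (if ov A A' then qa A' else 0)
        + w\<^sup>2 / 2 * qq A A' + w\<^sup>2 / 2 * qq A' A" for A A'
    by (cases "ov A A'") (simp_all add: algebra_simps add_divide_distrib)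
  have split: "(\<Sum>A\<in>Sq. \<Sum>A'\<in>Sq. (if ov A A' then w\<^sup>2 * (qa A + qa A') / 2 else 0) + w\<^sup>2 * (qq A A' + qq A' A) / 2)
     = w\<^sup>2 / 2 * (\<Sum>A\<in>Sq. \<Sum>A'\<in>Sq. if ov A A' then qa A else 0) + w\<^sup>2 / 2 * (\<Sum>A\<in>Sq. \<Sum>A'\<in>Sq. if ov A A' then qa A' else 0)
       + w\<^sup>2 / 2 * (\<Sum>A\<in>Sq. \<Sum>A'\<in>Sq. qq A A') + w\<^sup>2 / 2 * (\<Sum>A\<in>Sq. \<Sum>A'\<in>Sq. qq A' A)"
    by (simp only: pointwise sum.distrib sum_distrib_left)
  have swap_qq: "(\<Sum>A\<in>Sq. \<Sum>A'\<in>Sq. qq A' A) = (\<Sum>A\<in>Sq. \<Sum>A'\<in>Sq. qq A A')"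
    by (rule sum.swap)
  have "(vnorm L d (\<lambda>\<sigma>. \<Sum>A\<in>Sq. apply_op L d (W A) \<psi> \<sigma>))\<^sup>2
      = (\<Sum>A\<in>Sq. \<Sum>A'\<in>Sq. Re (inner L d (apply_op L d (W A) \<psi>) (apply_op L d (W A') \<psi>)))"
    by (simp add: vnorm_sq inner_sum_left inner_sum_right)
  also have "\<dots> \<le> (\<Sum>A\<in>Sq. \<Sum>A'\<in>Sq. (if ov A A' then w\<^sup>2 * (qa A + qa A') / 2 else 0) + w\<^sup>2 * (qq A A' + qq A' A) / 2)"
    unfolding qa_def qq_def by (intro sum_mono re_inner_W_le)
  also have "\<dots> = w\<^sup>2 * (\<Sum>A\<in>Sq. \<Sum>A'\<in>Sq. if ov A A' then qa A else 0) + w\<^sup>2 * (\<Sum>A\<in>Sq. \<Sum>A'\<in>Sq. qq A A')"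
    unfolding split sum_sym_swap[OF ov_sym] swap_qq by (simp add: algebra_simps)
  also have "\<dots> \<le> w\<^sup>2 * (K1 * (K2 * X)) + w\<^sup>2 * (K2\<^sup>2 * X)"
  proof (intro add_mono mult_left_mono)
    show "(\<Sum>A\<in>Sq. \<Sum>A'\<in>Sq. if ov A A' then qa A else 0) \<le> K1 * (K2 * X)"
      using sum_overlapping_le[OF finite_Sq K1, where f=qa]
        sum_compl_le_double_compl[OF finite_S2 K2_nonneg P_idem comm_P_Q sum_compl_Q_le] K1_nonneg
      unfolding qa_def X_def by (meson mult_left_mono order_trans zero_le_power2)
    show "(\<Sum>A\<in>Sq. \<Sum>A'\<in>Sq. qq A A') \<le> K2\<^sup>2 * X"
      unfolding qq_def X_def
      by (rule sum_compl_compl_le_double_compl[OF finite_S2 K2_nonneg P_idem comm_P_Q sum_compl_Q_le])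
  qed auto
  also have "\<dots> = w\<^sup>2 * (K1 * K2 + K2\<^sup>2) * X" by (simp add: algebra_simps)
  finally show ?thesis by (simp add: X_def)
qed

end

section \<open>Squares on the torus\<close>

lemma sq_mod: "sq L (x mod int L) (y mod int L) r = sq L x y r"
  unfolding sq_def by (simp add: mod_add_left_eq)

lemma squares_corner_ex:
  assumes "A \<in> squares L r" "L \<ge> 1"
  shows "\<exists>p. 0 \<le> fst p \<and> fst p < int L \<and> 0 \<le> snd p \<and> snd p < int L \<and> A = sq L (fst p) (snd p) r"
proof -
  obtain x y where A: "A = sq L x y r" using assms(1) by (auto simp: squares_def)
  show ?thesis
    by (rule exI[of _ "(x mod int L, y mod int L)"]) (use assms(2) A sq_mod in auto)
qed

text \<open>For \<open>r \<ge> L\<close> several corners describe the same square; \<open>corner\<close> fixes one, so that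
  \<open>collar\<close> is a function of the square.\<close>
definition corner :: "nat \<Rightarrow> nat \<Rightarrow> site set \<Rightarrow> int \<times> int" where
  "corner L r A = (SOME p. 0 \<le> fst p \<and> fst p < int L \<and> 0 \<le> snd p \<and> snd p < int L \<and> A = sq L (fst p) (snd p) r)"

definition collar :: "nat \<Rightarrow> nat \<Rightarrow> site set \<Rightarrow> site set" where
  "collar L r A = sq L (fst (corner L r A) - 1) (snd (corner L r A) - 1) (r + 2)"

lemma corner_props:
  assumes "A \<in> squares L r" "L \<ge> 1"
  shows "0 \<le> fst (corner L r A) \<and> fst (corner L r A) < int L \<and> 0 \<le> snd (corner L r A) \<and> snd (corner L r A) < int L
         \<and> A = sq L (fst (corner L r A)) (snd (corner L r A)) r"
  unfolding corner_def using someI_ex[OF squares_corner_ex[OF assms]] .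

lemma corner_inj: "L \<ge> 1 \<Longrightarrow> inj_on (corner L r) (squares L r)"
  by (rule inj_onI) (metis corner_props)

lemma sq_sites: "L \<ge> 1 \<Longrightarrow> sq L x y r \<subseteq> sites L"
proof
  fix p assume L: "L \<ge> 1" and "p \<in> sq L x y r"
  then obtain i j where p: "p = ((x + i) mod int L, (y + j) mod int L)" by (auto simp: sq_def)
  have "0 < int L" using L by simp
  then show "p \<in> sites L" unfolding p sites_def by (simp add: pos_mod_sign pos_mod_bound)
qed

lemma squares_sites: "L \<ge> 1 \<Longrightarrow> A \<in> squares L r \<Longrightarrow> A \<subseteq> sites L"
  unfolding squares_def using sq_sites by blast

lemma square_sub_collar:
  assumes "A \<in> squares L r" "L \<ge> 1"
  shows "A \<subseteq> collar L r A"
proof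
  fix p assume "p \<in> A"
  then have "p \<in> sq L (fst (corner L r A)) (snd (corner L r A)) r" using corner_props[OF assms] by simp
  then obtain i j where ij: "0 \<le> i" "i < int r" "0 \<le> j" "j < int r"
    "p = ((fst (corner L r A) + i) mod int L, (snd (corner L r A) + j) mod int L)"
    by (auto simp: sq_def)
  show "p \<in> collar L r A"
    unfolding collar_def sq_def
    by (rule CollectI, rule exI[of _ "i + 1"], rule exI[of _ "j + 1"]) (use ij in auto)
qed

lemma squares_image: "L \<ge> 1 \<Longrightarrow> squares L r = (\<lambda>(x, y). sq L x y r) ` ({0..<int L} \<times> {0..<int L})"
proof
  assume L: "L \<ge> 1"
  show "squares L r \<subseteq> (\<lambda>(x, y). sq L x y r) ` ({0..<int L} \<times> {0..<int L})"
  proof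
    fix A assume A: "A \<in> squares L r"
    show "A \<in> (\<lambda>(x, y). sq L x y r) ` ({0..<int L} \<times> {0..<int L})"
      using corner_props[OF A L] by (intro image_eqI[of _ _ "corner L r A"]) (auto simp: split_def mem_Times_iff)
  qed
  show "(\<lambda>(x, y). sq L x y r) ` ({0..<int L} \<times> {0..<int L}) \<subseteq> squares L r"
    by (auto simp: squares_def)
qed

lemma finite_squares: "L \<ge> 1 \<Longrightarrow> finite (squares L r)"
  by (simp add: squares_image)

lemma squares_nonempty: "squares L r \<noteq> {}"
  by (auto simp: squares_def)

lemma card_box: "card ({0..<int n} \<times> {0..<int n}) = n\<^sup>2"
  by (simp add: card_cartesian_product power2_eq_square)

lemma mod_shift_eq:
  fixes n x z a b :: int
  assumes "(x + a) mod n = (z + b) mod n" "0 \<le> z" "z < n"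
  shows "(x + (a - b)) mod n = z"
proof -
  have "(x + (a - b)) mod n = ((x + a) mod n - b) mod n" by (simp add: mod_diff_left_eq algebra_simps)
  also have "\<dots> = ((z + b) mod n - b) mod n" by (simp only: assms(1))
  also have "\<dots> = z mod n" by (simp add: mod_diff_left_eq)
  finally show ?thesis using assms(2,3) by simp
qed

lemma card_collars_containing_point:
  assumes L: "L \<ge> 1"
  shows "card {A \<in> squares L r. p \<in> collar L r A} \<le> (r + 2)\<^sup>2"
proof -
  obtain a b where p: "p = (a, b)" by (cases p)
  let ?f = "\<lambda>(s::int, t::int). ((a + (1 - s)) mod int L, (b + (1 - t)) mod int L)"
  let ?K = "{0..<int (r + 2)} \<times> {0..<int (r + 2)}"
  have sub: "corner L r ` {A \<in> squares L r. p \<in> collar L r A} \<subseteq> ?f ` ?K"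
  proof
    fix z assume "z \<in> corner L r ` {A \<in> squares L r. p \<in> collar L r A}"
    then obtain A where A: "A \<in> squares L r" "p \<in> collar L r A" and z: "z = corner L r A" by blast
    note R = corner_props[OF A(1) L]
    obtain i j where ij: "0 \<le> i" "i < int (r + 2)" "0 \<le> j" "j < int (r + 2)"
      "p = ((fst z - 1 + i) mod int L, (snd z - 1 + j) mod int L)"
      using A(2) by (auto simp: collar_def sq_def z)
    have x: "(a + (1 - i)) mod int L = fst z"
      using mod_shift_eq[of a 0 "int L" "fst z" "i - 1"] ij(5) p R z by (simp add: algebra_simps)
    have y: "(b + (1 - j)) mod int L = snd z"
      using mod_shift_eq[of b 0 "int L" "snd z" "j - 1"] ij(5) p R z by (simp add: algebra_simps)
    show "z \<in> ?f ` ?K"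
      by (rule image_eqI[of _ _ "(i, j)"]) (use x y ij in \<open>auto simp: prod_eq_iff\<close>)
  qed
  have "card {A \<in> squares L r. p \<in> collar L r A} = card (corner L r ` {A \<in> squares L r. p \<in> collar L r A})"
    by (rule card_image[symmetric]) (rule inj_on_subset[OF corner_inj[OF L]], auto)
  also have "\<dots> \<le> card (?f ` ?K)" by (rule card_mono[OF _ sub]) simp
  also have "\<dots> \<le> card ?K" by (rule card_image_le) simp
  also have "\<dots> = (r + 2)\<^sup>2" by (rule card_box)
  finally show ?thesis .
qed

lemma card_collars_overlapping:
  assumes L: "L \<ge> 1" and A: "A \<in> squares L r"
  shows "card {A' \<in> squares L r. collar L r A \<inter> collar L r A' \<noteq> {}} \<le> (2 * r + 3)\<^sup>2"
proof -
  obtain x y where xy: "corner L r A = (x, y)" by (cases "corner L r A")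
  let ?g = "\<lambda>(k::int, l::int). ((x + k) mod int L, (y + l) mod int L)"
  let ?K = "{-(int r + 1)..int r + 1} \<times> {-(int r + 1)..int r + 1}"
  have sub: "corner L r ` {A' \<in> squares L r. collar L r A \<inter> collar L r A' \<noteq> {}} \<subseteq> ?g ` ?K"
  proof
    fix z assume "z \<in> corner L r ` {A' \<in> squares L r. collar L r A \<inter> collar L r A' \<noteq> {}}"
    then obtain A' where A': "A' \<in> squares L r" "collar L r A \<inter> collar L r A' \<noteq> {}" and z: "z = corner L r A'" by blast
    note R = corner_props[OF A'(1) L]
    obtain p where p1: "p \<in> collar L r A" and p2: "p \<in> collar L r A'" using A'(2) by blast
    obtain i j where ij: "0 \<le> i" "i < int (r + 2)" "0 \<le> j" "j < int (r + 2)"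
      "p = ((x - 1 + i) mod int L, (y - 1 + j) mod int L)"
      using p1 by (auto simp: collar_def sq_def xy)
    obtain i' j' where ij': "0 \<le> i'" "i' < int (r + 2)" "0 \<le> j'" "j' < int (r + 2)"
      "p = ((fst z - 1 + i') mod int L, (snd z - 1 + j') mod int L)"
      using p2 by (auto simp: collar_def sq_def z)
    have ex: "(x + (i - i')) mod int L = fst z"
      using mod_shift_eq[of x "i - 1" "int L" "fst z" "i' - 1"] ij(5) ij'(5) R z by (simp add: algebra_simps)
    have ey: "(y + (j - j')) mod int L = snd z"
      using mod_shift_eq[of y "j - 1" "int L" "snd z" "j' - 1"] ij(5) ij'(5) R z by (simp add: algebra_simps)
    show "z \<in> ?g ` ?K"
      by (rule image_eqI[of _ _ "(i - i', j - j')"]) (use ex ey ij ij' in \<open>auto simp: prod_eq_iff\<close>)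
  qed
  have cK: "card ?K = (2 * r + 3)\<^sup>2"
  proof -
    have "card {-(int r + 1)..int r + 1} = 2 * r + 3" by simp
    then show ?thesis by (simp add: card_cartesian_product power2_eq_square)
  qed
  have "card {A' \<in> squares L r. collar L r A \<inter> collar L r A' \<noteq> {}} = card (corner L r ` {A' \<in> squares L r. collar L r A \<inter> collar L r A' \<noteq> {}})"
    by (rule card_image[symmetric]) (rule inj_on_subset[OF corner_inj[OF L]], auto)
  also have "\<dots> \<le> card (?g ` ?K)" by (rule card_mono[OF _ sub]) simp
  also have "\<dots> \<le> card ?K" by (rule card_image_le) simp
  also have "\<dots> = (2 * r + 3)\<^sup>2" by (rule cK)
  finally show ?thesis .
qed

lemma card_collars_containing_square:
  assumes L: "L \<ge> 1" and i: "i \<in> squares L 2"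
  shows "card {A \<in> squares L r. i \<subseteq> collar L r A} \<le> (r + 2)\<^sup>2"
proof -
  obtain a b where i': "i = sq L a b 2" using i by (auto simp: squares_def)
  have p: "(a mod int L, b mod int L) \<in> i" unfolding i' sq_def
    by (rule CollectI, rule exI[of _ 0], rule exI[of _ 0]) simp
  have "card {A \<in> squares L r. i \<subseteq> collar L r A} \<le> card {A \<in> squares L r. (a mod int L, b mod int L) \<in> collar L r A}"
    by (rule card_mono) (use finite_squares[OF L] p in auto)
  also have "\<dots> \<le> (r + 2)\<^sup>2" by (rule card_collars_containing_point[OF L])
  finally show ?thesis .
qed

lemma vnorm_scale: "vnorm L d (\<lambda>\<sigma>. c * x \<sigma>) = cmod c * vnorm L d x"
proof -
  have "(vnorm L d (\<lambda>\<sigma>. c * x \<sigma>))\<^sup>2 = ((cmod c) * vnorm L d x)\<^sup>2"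
    by (simp add: vnorm_def sum_nonneg norm_mult power_mult_distrib sum_distrib_left)
  then show ?thesis using vnorm_nonneg[of L d] by (simp add: power2_eq_iff_nonneg)
qed

lemma apply_op_bound:
  "vnorm L d (apply_op L d M x) \<le> sqrt (\<Sum>\<sigma>\<in>cfgs L d. \<Sum>\<tau>\<in>cfgs L d. (cmod (M \<sigma> \<tau>))\<^sup>2) * vnorm L d x"
proof -
  let ?C = "cfgs L d"
  have row: "(cmod (apply_op L d M x \<sigma>))\<^sup>2 \<le> (\<Sum>\<tau>\<in>?C. (cmod (M \<sigma> \<tau>))\<^sup>2) * (vnorm L d x)\<^sup>2" for \<sigma>
  proof -
    have "cmod (apply_op L d M x \<sigma>) \<le> (\<Sum>\<tau>\<in>?C. \<bar>cmod (M \<sigma> \<tau>)\<bar> * \<bar>cmod (x \<tau>)\<bar>)"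
      unfolding apply_op_def by (rule order_trans[OF norm_sum]) (simp add: norm_mult)
    also have "\<dots> \<le> L2_set (\<lambda>\<tau>. cmod (M \<sigma> \<tau>)) ?C * L2_set (\<lambda>\<tau>. cmod (x \<tau>)) ?C"
      by (rule L2_set_mult_ineq)
    finally have "cmod (apply_op L d M x \<sigma>) \<le> L2_set (\<lambda>\<tau>. cmod (M \<sigma> \<tau>)) ?C * vnorm L d x"
      by (simp add: vnorm_L2)
    then have "(cmod (apply_op L d M x \<sigma>))\<^sup>2 \<le> (L2_set (\<lambda>\<tau>. cmod (M \<sigma> \<tau>)) ?C * vnorm L d x)\<^sup>2"
      by (simp add: power_mono)
    also have "\<dots> = (\<Sum>\<tau>\<in>?C. (cmod (M \<sigma> \<tau>))\<^sup>2) * (vnorm L d x)\<^sup>2"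
      by (simp add: L2_set_def power_mult_distrib sum_nonneg)
    finally show ?thesis .
  qed
  have "(vnorm L d (apply_op L d M x))\<^sup>2 = (\<Sum>\<sigma>\<in>?C. (cmod (apply_op L d M x \<sigma>))\<^sup>2)"
    by (simp add: vnorm_def sum_nonneg)
  also have "\<dots> \<le> (\<Sum>\<sigma>\<in>?C. (\<Sum>\<tau>\<in>?C. (cmod (M \<sigma> \<tau>))\<^sup>2) * (vnorm L d x)\<^sup>2)"
    by (intro sum_mono row)
  also have "\<dots> = (sqrt (\<Sum>\<sigma>\<in>?C. \<Sum>\<tau>\<in>?C. (cmod (M \<sigma> \<tau>))\<^sup>2) * vnorm L d x)\<^sup>2"
    by (simp add: power_mult_distrib sum_nonneg sum_distrib_right)
  finally show ?thesis
    by (rule power2_le_imp_le) (simp add: vnorm_nonneg sum_nonneg)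
qed

lemma opnorm_bound:
  "vnorm L d (apply_op L d M x) \<le> opnorm L d M * vnorm L d x \<and> 0 \<le> opnorm L d M"
proof -
  let ?S = "{vnorm L d (apply_op L d M \<psi>) | \<psi>. vnorm L d \<psi> \<le> 1}"
  let ?K = "sqrt (\<Sum>\<sigma>\<in>cfgs L d. \<Sum>\<tau>\<in>cfgs L d. (cmod (M \<sigma> \<tau>))\<^sup>2)"
  have K0: "0 \<le> ?K" by (simp add: sum_nonneg)
  have bdd: "bdd_above ?S"
  proof (rule bdd_aboveI)
    fix z assume "z \<in> ?S"
    then obtain \<psi> where z: "z = vnorm L d (apply_op L d M \<psi>)" and p: "vnorm L d \<psi> \<le> 1" by blast
    have "z \<le> ?K * vnorm L d \<psi>" using z apply_op_bound by metis
    also have "\<dots> \<le> ?K * 1" using K0 p by (intro mult_left_mono) auto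
    finally show "z \<le> ?K" by simp
  qed
  have zin: "0 \<in> ?S"
  proof -
    have "vnorm L d (apply_op L d M (\<lambda>_. 0)) = 0" by (simp add: apply_op_zero vnorm_def)
    moreover have "vnorm L d (\<lambda>_. 0) \<le> 1" by (simp add: vnorm_def)
    ultimately show ?thesis by force
  qed
  have on0: "0 \<le> opnorm L d M" unfolding opnorm_def using cSup_upper[OF zin bdd] .
  have "vnorm L d (apply_op L d M x) \<le> opnorm L d M * vnorm L d x"
  proof (cases "vnorm L d x = 0")
    case True
    then have "vec_eq L d x (\<lambda>_. 0)" by (simp add: vnorm_zero_iff)
    then have "apply_op L d M x = apply_op L d M (\<lambda>_. 0)" by (rule apply_op_cong)
    then have "vnorm L d (apply_op L d M x) = 0" by (simp add: apply_op_zero vnorm_def)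
    then show ?thesis using True by simp
  next
    case False
    define n where "n = vnorm L d x"
    have n: "n > 0" using False vnorm_nonneg[of L d x] by (simp add: n_def)
    define y where "y = (\<lambda>\<sigma>. complex_of_real (1 / n) * x \<sigma>)"
    have cm: "cmod (complex_of_real (1 / n)) = 1 / n" using n by (simp only: norm_of_real) simp
    then have ny: "vnorm L d y = 1" unfolding y_def vnorm_scale using n by (simp add: n_def)
    have "vnorm L d (apply_op L d M y) \<in> ?S" using ny by force
    then have le: "vnorm L d (apply_op L d M y) \<le> opnorm L d M"
      unfolding opnorm_def by (rule cSup_upper[OF _ bdd])
    have eq: "apply_op L d M y = (\<lambda>\<sigma>. complex_of_real (1 / n) * apply_op L d M x \<sigma>)"
      unfolding y_def by (rule apply_op_scale)
    have "vnorm L d (apply_op L d M y) = cmod (complex_of_real (1 / n)) * vnorm L d (apply_op L d M x)"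
      unfolding eq by (rule vnorm_scale)
    then have "vnorm L d (apply_op L d M y) = vnorm L d (apply_op L d M x) / n"
      unfolding cm by simp
    then show ?thesis using le n by (simp add: n_def divide_le_eq mult.commute)
  qed
  then show ?thesis using on0 by simp
qed

lemma H0_apply: "apply_op L d (H0 L G) \<psi> = (\<lambda>\<sigma>. \<Sum>A\<in>squares L 2. apply_op L d (G A) \<psi> \<sigma>)"
  unfolding apply_op_def H0_def sum_distrib_right by (rule ext) (rule sum.swap)

lemma orth_proj_facts:
  assumes "is_orth_proj L d M V"
  shows "herm L d M" "idem L d M" "\<And>\<psi>. \<psi> \<in> V \<longleftrightarrow> vec_eq L d (apply_op L d M \<psi>) \<psi>"
    "op_eq L d M (adjoint M)"
  using assms by (auto simp: is_orth_proj_def intro: herm_op_eq idem_op_eq)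

lemma Pblock_proj_prod: "Pblock L d PA B = proj_prod L d PA {A \<in> squares L 2. A \<subseteq> B}"
  by (simp add: Pblock_def proj_prod_def)

section \<open>The relative bound\<close>

lemma adjoint_mult_proj_zero:
  assumes hP: "herm L d P" and cWP: "comm L d W P" and WP: "op_eq L d (mmult L d W P) (\<lambda>_ _. 0)"
  shows "op_eq L d (mmult L d (adjoint W) P) (\<lambda>_ _. 0)"
proof (rule op_eqI_vec)
  fix y
  have WP0: "vec_eq L d (apply_op L d W (apply_op L d P x)) (\<lambda>_. 0)" for x
    using apply_op_op_eq[OF WP, of x] apply_op_mmult_vec[of L d W P x]
    by (auto simp: vec_eq_def apply_op_def)
  have "vec_eq L d (apply_op L d (adjoint W) (apply_op L d P y)) (\<lambda>_. 0)"
  proof (rule vec_eq_inner)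
    fix \<phi>
    have "inner L d \<phi> (apply_op L d (adjoint W) (apply_op L d P y)) = inner L d (apply_op L d P (apply_op L d W \<phi>)) y"
      using hP by (simp add: inner_adjoint2 herm_def)
    also have "\<dots> = inner L d (apply_op L d W (apply_op L d P \<phi>)) y"
      using cWP by (intro inner_cong) (auto simp: comm_def vec_eq_def)
    also have "\<dots> = inner L d (\<lambda>_. 0) y" by (rule inner_cong[OF WP0 vec_eq_refl])
    finally show "inner L d \<phi> (apply_op L d (adjoint W) (apply_op L d P y)) = inner L d \<phi> (\<lambda>_. 0)"
      by (simp add: inner_def)
  qed
  then show "vec_eq L d (apply_op L d (mmult L d (adjoint W) P) y) (apply_op L d (\<lambda>_ _. 0) y)"
    using apply_op_mmult_vec[of L d "adjoint W" P y] by (auto simp: vec_eq_def apply_op_def)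
qed

lemma vnorm_apply_le_Max_opnorm:
  assumes "finite S" "A \<in> S"
  shows "vnorm L d (apply_op L d (W A) x) \<le> Max ((\<lambda>A. opnorm L d (W A)) ` S) * vnorm L d x"
proof -
  have "vnorm L d (apply_op L d (W A) x) \<le> opnorm L d (W A) * vnorm L d x"
    using opnorm_bound by blast
  also have "\<dots> \<le> Max ((\<lambda>A. opnorm L d (W A)) ` S) * vnorm L d x"
    using assms by (intro mult_right_mono Max_ge vnorm_nonneg) auto
  finally show ?thesis .
qed

lemma Max_opnorm_nonneg:
  assumes "finite S" "A \<in> S"
  shows "0 \<le> Max ((\<lambda>A. opnorm L d (W A)) ` S)"
  using opnorm_bound[of L d "W A"] assms by (meson Max_ge finite_imageI image_eqI order_trans)

lemma collar_counts_le:
  assumes "1 \<le> q"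
  shows "real ((2 * q + 3)\<^sup>2) * real ((q + 2)\<^sup>2) + (real ((q + 2)\<^sup>2))\<^sup>2 \<le> (18 * (real q)\<^sup>2)\<^sup>2"
proof -
  have a: "real ((2 * q + 3)\<^sup>2) \<le> 25 * (real q)\<^sup>2"
    using power_mono[of "real (2 * q + 3)" "5 * real q" 2] assms by (simp add: power_mult_distrib)
  have b: "real ((q + 2)\<^sup>2) \<le> 9 * (real q)\<^sup>2"
    using power_mono[of "real (q + 2)" "3 * real q" 2] assms by (simp add: power_mult_distrib)
  have "real ((2 * q + 3)\<^sup>2) * real ((q + 2)\<^sup>2) + (real ((q + 2)\<^sup>2))\<^sup>2
      \<le> (25 * (real q)\<^sup>2) * (9 * (real q)\<^sup>2) + (9 * (real q)\<^sup>2)\<^sup>2"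
    by (intro add_mono mult_mono power_mono a b) auto
  also have "\<dots> \<le> (18 * (real q)\<^sup>2)\<^sup>2" by (simp add: power2_eq_square)
  finally show ?thesis .
qed

locale commuting_hamiltonian =
  fixes L :: nat and d :: "site \<Rightarrow> nat" and G PA :: "site set \<Rightarrow> op" and P :: op
  assumes L_pos: "1 \<le> L" and dim_pos: "\<And>u. u \<in> sites L \<Longrightarrow> 1 \<le> d u"
    and ham: "hamiltonian_ok L d G PA P"
begin

lemma finite_squares': "finite (squares L r)"
  by (rule finite_squares[OF L_pos])

lemma
  assumes "i \<in> squares L 2"
  shows G_acts_on: "acts_on L d i (G i)" and G_psd: "psd L d (G i)"
    and G_le_sq: "op_le L d (G i) (mmult L d (G i) (G i))"
    and PA_herm: "herm L d (PA i)" and PA_idem: "idem L d (PA i)"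
    and PA_fixes_iff: "\<And>\<psi>. vec_eq L d (apply_op L d (G i) \<psi>) (\<lambda>_. 0) \<longleftrightarrow> vec_eq L d (apply_op L d (PA i) \<psi>) \<psi>"
  using ham assms orth_proj_facts[of L d "PA i" "kernel L d (G i)"]
  by (auto simp: hamiltonian_ok_def kernel_def)

lemma P_herm: "herm L d P" and P_selfadjoint: "op_eq L d P (adjoint P)"
  using ham orth_proj_facts[of L d P] by (auto simp: hamiltonian_ok_def)

lemma G_herm: "i \<in> squares L 2 \<Longrightarrow> herm L d (G i)"
  by (rule psd_herm[OF G_psd])

lemma comm_PA:
  assumes "i \<in> squares L 2" "comm L d X (G i)"
  shows "comm L d X (PA i)"
  using comm_kernel_proj[OF PA_idem PA_fixes_iff G_herm PA_herm] assms by blast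

lemma comm_G_PA:
  assumes "i \<in> squares L 2" "j \<in> squares L 2"
  shows "comm L d (G j) (PA i)"
  using ham assms by (intro comm_PA comm_commute) (auto simp: hamiltonian_ok_def)

lemma comm_PA_PA: "i \<in> squares L 2 \<Longrightarrow> j \<in> squares L 2 \<Longrightarrow> comm L d (PA i) (PA j)"
  by (intro comm_PA comm_sym[OF comm_G_PA])

lemma comm_Pblock:
  assumes "\<And>i. i \<in> squares L 2 \<Longrightarrow> i \<subseteq> B \<Longrightarrow> comm L d X (PA i)"
  shows "comm L d X (Pblock L d PA B)"
  unfolding Pblock_proj_prod using assms finite_squares'
  by (intro comm_proj_prod[where S="squares L 2", OF comm_PA_PA]) auto

lemma herm_Pblock: "herm L d (Pblock L d PA B)" and idem_Pblock: "idem L d (Pblock L d PA B)"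
  unfolding Pblock_proj_prod using finite_squares'
    herm_idem_proj_prod[where S="squares L 2", OF comm_PA_PA _ _ PA_herm PA_idem]
  by auto

lemma compl_Pblock_norm_sq_le:
  "(vnorm L d (\<phi> - apply_op L d (Pblock L d PA B) \<phi>))\<^sup>2
     \<le> (\<Sum>i\<in>{i \<in> squares L 2. i \<subseteq> B}. (vnorm L d (\<phi> - apply_op L d (PA i) \<phi>))\<^sup>2)"
  unfolding Pblock_proj_prod using finite_squares'
  by (intro compl_proj_prod_norm_sq_le[where S="squares L 2", OF comm_PA_PA _ _ PA_herm PA_idem]) auto

lemma comm_local_op_Pblock:
  assumes "acts_on L d A W" "A \<subseteq> sites L" "A \<inter> B = {}"
  shows "comm L d W (Pblock L d PA B)"
proof (rule comm_Pblock)
  fix i assume i: "i \<in> squares L 2" "i \<subseteq> B"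
  have "A \<inter> i = {}" using assms(3) i(2) by blast
  then have "commute L d W (G i)"
    by (rule disjoint_commute[OF assms(1) G_acts_on[OF i(1)] _ assms(2) squares_sites[OF L_pos i(1)]])
  then show "comm L d W (PA i)" using i by (intro comm_PA comm_commute)
qed

lemma sum_compl_Pblock_collar_le:
  "(\<Sum>A\<in>squares L q. (vnorm L d (\<phi> - apply_op L d (Pblock L d PA (collar L q A)) \<phi>))\<^sup>2)
     \<le> real ((q + 2)\<^sup>2) * (\<Sum>i\<in>squares L 2. (vnorm L d (\<phi> - apply_op L d (PA i) \<phi>))\<^sup>2)"
proof -
  let ?f = "\<lambda>i. (vnorm L d (\<phi> - apply_op L d (PA i) \<phi>))\<^sup>2"
  let ?Sq = "squares L q" and ?S2 = "squares L 2"
  have "(\<Sum>A\<in>?Sq. (vnorm L d (\<phi> - apply_op L d (Pblock L d PA (collar L q A)) \<phi>))\<^sup>2)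
      \<le> (\<Sum>A\<in>?Sq. \<Sum>i\<in>{i \<in> ?S2. i \<subseteq> collar L q A}. ?f i)"
    by (intro sum_mono compl_Pblock_norm_sq_le)
  also have "\<dots> = (\<Sum>i\<in>?S2. \<Sum>A\<in>?Sq. if i \<subseteq> collar L q A then ?f i else 0)"
    using finite_squares' by (simp add: sum.inter_filter) (rule sum.swap)
  also have "\<dots> = (\<Sum>i\<in>?S2. real (card {A \<in> ?Sq. i \<subseteq> collar L q A}) * ?f i)"
    using finite_squares' by (simp add: sum.inter_filter[symmetric])
  also have "\<dots> \<le> (\<Sum>i\<in>?S2. real ((q + 2)\<^sup>2) * ?f i)"
  proof (rule sum_mono, rule mult_right_mono)
    fix i assume "i \<in> ?S2"
    then show "real (card {A \<in> ?Sq. i \<subseteq> collar L q A}) \<le> real ((q + 2)\<^sup>2)"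
      using card_collars_containing_square[OF L_pos] of_nat_mono by blast
  qed simp
  finally show ?thesis by (simp add: sum_distrib_left)
qed

context
  fixes Lstar q :: nat
  assumes TQO2: "TQO2 L d Lstar PA P" and q_pos: "1 \<le> q" and q_le: "q \<le> Lstar"
begin

lemma rkernel_ptrace_collar:
  assumes "A \<in> squares L q"
  shows "rkernel d A (ptrace L d A P) = rkernel d A (ptrace L d A (Pblock L d PA (collar L q A)))"
proof -
  let ?x = "fst (corner L q A)" and ?y = "snd (corner L q A)"
  have "A = sq L ?x ?y q" using corner_props[OF assms L_pos] by blast
  moreover have "rkernel d (sq L ?x ?y q) (ptrace L d (sq L ?x ?y q) P) =
      rkernel d (sq L ?x ?y q) (ptrace L d (sq L ?x ?y q) (Pblock L d PA (sq L (?x - 1) (?y - 1) (q + 2))))"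
    using TQO2 q_pos q_le unfolding TQO2_def by blast
  ultimately show ?thesis by (simp add: collar_def)
qed

context
  fixes A :: "site set" and W :: op
  assumes A: "A \<in> squares L q" and W_acts: "acts_on L d A W"
    and WP: "op_eq L d (mmult L d W P) (\<lambda>_ _. 0)"
begin

lemma local_op_Pblock_zero:
  "vec_eq L d (apply_op L d W (apply_op L d (Pblock L d PA (collar L q A)) x)) (\<lambda>_. 0)"
  using rkernel_ptrace_collar[OF A] squares_sites[OF L_pos A]
  by (intro acts_on_block_proj_zero[OF _ dim_pos W_acts P_selfadjoint WP _ herm_Pblock idem_Pblock]) auto

text \<open>\<open>Q W = (W\<^sup>* Q)\<^sup>*\<close>, and \<open>W\<^sup>*\<close> satisfies the hypotheses on \<open>W\<close> as well.\<close>
lemma Pblock_local_op_zero: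
  assumes cWP: "comm L d W P"
  shows "vec_eq L d (apply_op L d (Pblock L d PA (collar L q A)) (apply_op L d W x)) (\<lambda>_. 0)"
proof (rule vec_eq_inner)
  fix \<phi>
  let ?Q = "apply_op L d (Pblock L d PA (collar L q A))"
  have "vec_eq L d (apply_op L d (adjoint W) (?Q \<phi>)) (\<lambda>_. 0)"
    using rkernel_ptrace_collar[OF A] squares_sites[OF L_pos A]
      adjoint_mult_proj_zero[OF P_herm cWP WP] acts_on_adjoint[OF W_acts]
    by (intro acts_on_block_proj_zero[OF _ dim_pos _ P_selfadjoint _ _ herm_Pblock idem_Pblock]) auto
  then have "inner L d (apply_op L d (adjoint W) (?Q \<phi>)) x = inner L d (\<lambda>_. 0) x"
    by (rule inner_cong[OF _ vec_eq_refl])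
  then have "inner L d (apply_op L d (adjoint W) (?Q \<phi>)) x = 0" by (simp add: inner_def)
  moreover have "inner L d \<phi> (?Q (apply_op L d W x)) = inner L d (?Q \<phi>) (apply_op L d W x)"
    using herm_Pblock by (simp add: herm_def)
  moreover have "\<dots> = inner L d (apply_op L d (adjoint W) (?Q \<phi>)) x" by (rule inner_adjoint)
  ultimately show "inner L d \<phi> (?Q (apply_op L d W x)) = inner L d \<phi> (\<lambda>_. 0)" by simp
qed

end

lemma local_sum_norm_le:
  assumes W: "\<And>A. A \<in> squares L q \<Longrightarrow> acts_on L d A (WA A) \<and> commute L d (WA A) P \<and>
                      op_eq L d (mmult L d (WA A) P) (\<lambda>_ _. 0)"
  shows "vnorm L d (\<lambda>\<sigma>. \<Sum>A\<in>squares L q. apply_op L d (WA A) \<psi> \<sigma>)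
           \<le> 18 * Max ((\<lambda>A. opnorm L d (WA A)) ` squares L q) * (real q)\<^sup>2
             * vnorm L d (apply_op L d (H0 L G) \<psi>)"
proof -
  define w where "w = Max ((\<lambda>A. opnorm L d (WA A)) ` squares L q)"
  define X where "X = (\<Sum>i\<in>squares L 2. \<Sum>j\<in>squares L 2.
                        (vnorm L d (compl_proj L d (PA j) (compl_proj L d (PA i) \<psi>)))\<^sup>2)"
  let ?H = "vnorm L d (apply_op L d (H0 L G) \<psi>)"
  have w0: "0 \<le> w"
    unfolding w_def using squares_nonempty by (blast intro: Max_opnorm_nonneg finite_squares')
  have "(vnorm L d (\<lambda>\<sigma>. \<Sum>A\<in>squares L q. apply_op L d (WA A) \<psi> \<sigma>))\<^sup>2
      \<le> w\<^sup>2 * (real ((2 * q + 3)\<^sup>2) * real ((q + 2)\<^sup>2) + (real ((q + 2)\<^sup>2))\<^sup>2) * X"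
    unfolding w_def X_def
  proof (rule local_sum_norm_sq_bound[where ov = "\<lambda>A A'. collar L q A \<inter> collar L q A' \<noteq> {}"])
    fix A A' assume A: "A \<in> squares L q" and A': "A' \<in> squares L q"
      and "\<not> collar L q A \<inter> collar L q A' \<noteq> {}"
    then show "comm L d (WA A) (Pblock L d PA (collar L q A'))"
      using W square_sub_collar[OF A L_pos] squares_sites[OF L_pos A]
      by (intro comm_local_op_Pblock) blast+
  next
    fix A assume "A \<in> squares L q"
    then show "real (card {A' \<in> squares L q. collar L q A \<inter> collar L q A' \<noteq> {}}) \<le> real ((2 * q + 3)\<^sup>2)"
      using card_collars_overlapping[OF L_pos] of_nat_mono by blast
  qed (use W w0 finite_squares' sum_compl_Pblock_collar_le herm_Pblock PA_idem
        local_op_Pblock_zero Pblock_local_op_zero comm_commute comm_Pblock comm_PA_PA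
        vnorm_apply_le_Max_opnorm[where S="squares L q" and W=WA] in \<open>auto simp: w_def\<close>)
  also have "\<dots> \<le> w\<^sup>2 * (18 * (real q)\<^sup>2)\<^sup>2 * ?H\<^sup>2"
    using sum_double_compl_proj_le[OF finite_squares' G_psd G_le_sq PA_herm PA_idem PA_fixes_iff
        comm_PA_PA comm_G_PA, where \<psi>=\<psi>]
    by (intro mult_mono mult_left_mono collar_counts_le q_pos) (auto simp: X_def H0_apply sum_nonneg)
  also have "\<dots> = (18 * w * (real q)\<^sup>2 * ?H)\<^sup>2" by (simp add: power_mult_distrib)
  finally show ?thesis
    unfolding w_def[symmetric] by (rule power2_le_imp_le) (simp add: w0 vnorm_nonneg)
qed

end

end

theorem lemma3:
  fixes D :: nat and c0 :: real
  assumes "c0 > 0"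
  shows "\<exists>c::real. \<forall>(L::nat) (Lstar::nat) (d::site \<Rightarrow> nat) (G::site set \<Rightarrow> op)
            (PA::site set \<Rightarrow> op) (P::op) (q::nat) (WA::site set \<Rightarrow> op) (\<psi>::vec).
     L \<ge> 1 \<and> (\<forall>u\<in>sites L. 1 \<le> d u \<and> d u \<le> D) \<and> real Lstar \<ge> c0 * real L \<and>
     hamiltonian_ok L d G PA P \<and> TQO1 L d Lstar P \<and> TQO2 L d Lstar PA P \<and>
     1 \<le> q \<and> q \<le> Lstar \<and>
     (\<forall>A\<in>squares L q. acts_on L d A (WA A) \<and> commute L d (WA A) P \<and>
                      op_eq L d (mmult L d (WA A) P) (\<lambda>_ _. 0))
     \<longrightarrow>
     vnorm L d (\<lambda>\<sigma>. \<Sum>A\<in>squares L q. apply_op L d (WA A) \<psi> \<sigma>)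
       \<le> c * Max ((\<lambda>A. opnorm L d (WA A)) ` squares L q) * (real q)\<^sup>2
           * vnorm L d (apply_op L d (H0 L G) \<psi>)"
proof (intro exI[of _ 18] allI impI)
  fix L Lstar :: nat and d :: "site \<Rightarrow> nat" and G PA :: "site set \<Rightarrow> op" and P :: op
    and q :: nat and WA :: "site set \<Rightarrow> op" and \<psi> :: vec
  assume H: "L \<ge> 1 \<and> (\<forall>u\<in>sites L. 1 \<le> d u \<and> d u \<le> D) \<and> real Lstar \<ge> c0 * real L \<and>
     hamiltonian_ok L d G PA P \<and> TQO1 L d Lstar P \<and> TQO2 L d Lstar PA P \<and>
     1 \<le> q \<and> q \<le> Lstar \<and>
     (\<forall>A\<in>squares L q. acts_on L d A (WA A) \<and> commute L d (WA A) P \<and>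
                      op_eq L d (mmult L d (WA A) P) (\<lambda>_ _. 0))"
  interpret commuting_hamiltonian L d G PA P
    using H by unfold_locales auto
  show "vnorm L d (\<lambda>\<sigma>. \<Sum>A\<in>squares L q. apply_op L d (WA A) \<psi> \<sigma>)
       \<le> 18 * Max ((\<lambda>A. opnorm L d (WA A)) ` squares L q) * (real q)\<^sup>2 * vnorm L d (apply_op L d (H0 L G) \<psi>)"
    using H by (intro local_sum_norm_le[of Lstar]) auto
qed

end
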